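(* As formal power series in $q$ with integer coefficients, the following congruences hold coefficientwise modulo $5$: \begin{align*} \sum_{n\geq0}\overline{p}(20n)q^n&\equiv\phi(q)^3, & \sum_{n\geq0}\overline{p}(20n+5)q^n&\equiv-\phi(q)^2\psi(q^2),\\ \sum_{n\geq0}\overline{p}(20n+10)q^n&\equiv2\phi(q)\psi(q^2)^2, & \sum_{n\geq0}\overline{p}(20n+15)q^n&\equiv-3\psi(q^2)^3 . \end{align*}
   Context: An overpartition of a nonnegative integer $n$ is a partition of $n$ in which the first occurrence of each distinct part may be overlined. $\overline{p}(n)$ denotes the number of overpartitions of $n$, with $\overline{p}(0)=1$; equivalently $\sum_{n\ge0}\overline{p}(n)q^n=\prod_{k\ge1}\frac{1+q^k}{1-q^k}$. Ramanujan's theta functions are $\phi(q)=\sum_{n=-\infty}^{\infty}q^{n^2}$ and $\psi(q)=\sum_{n=0}^{\infty}q^{n(n+1)/2}$. *)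

theory Defs
  imports "HOL-Library.Multiset" "HOL-Computational_Algebra.Formal_Power_Series"
          "HOL-Number_Theory.Cong"
begin

text \<open>A partition of n: a multiset of positive integers with sum n.
  An overpartition of n: a partition together with the set of distinct parts
  whose first occurrence is overlined.\<close>
definition overpartitions :: "nat \<Rightarrow> (nat multiset \<times> nat set) set" where
  "overpartitions n = {(M, S). (\<forall>x\<in>#M. 0 < x) \<and> sum_mset M = n \<and> S \<subseteq> set_mset M}"

definition overpart :: "nat \<Rightarrow> nat" where
  "overpart n = card (overpartitions n)"

definition phi :: "int fps" where
  "phi = Abs_fps (\<lambda>n. int (card {k::int. k^2 = int n}))"

definition psi :: "int fps" where
  "psi = Abs_fps (\<lambda>n. int (card {k::nat. k * (k + 1) div 2 = n}))"

end

theory Submission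
  imports Defs
begin

text \<open>
  Let \<open>G(q) = \<Sum> p(n) q^n = \<Prod> (1 + q^k)/(1 - q^k)\<close>.  The proof has three parts.
  (1) Gauss' identity \<open>G(q) \<phi>(-q) = 1\<close>.  Counting overpartitions with bounded parts gives the
      truncated product for \<open>G\<close>; a finite form of Jacobi's triple product at \<open>z = -1\<close>,
      \<open>\<Sum>\<^bsub>|j| \<le> n\<^esub> (-1)^j q^(j^2) [2n, n+j]_(q^2) = (q;q^2)_n^2\<close>, shows that \<open>\<phi>(-q)\<close> agrees with
      \<open>(q;q^2)_n^2 (q^2;q^2)_n\<close> below degree \<open>2n+1\<close>; comparing truncations gives the identity.
  (2) The 5-section of \<open>G\<close>.  Frobenius \<open>f^5 \<equiv> f(q^5) (mod 5)\<close> turns Gauss' identity into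
      \<open>G(q) \<phi>(-q^5) \<equiv> \<phi>(-q)^4\<close>.  Splitting \<open>\<phi>(-q) = A + B + C\<close> by the residue of \<open>k mod 5\<close>
      and using the lattice identity \<open>A^2 + BC = \<phi>(-q^5)^2\<close> (the map \<open>(u,v) \<mapsto> (u+2v, 2u-v)\<close>),
      the exponents divisible by 5 give \<open>\<Sum> p(5n) q^n \<equiv> \<phi>(-q)^3 (mod 5)\<close>.
  (3) The 2-dissection \<open>\<phi>(-q) = \<phi>(q^4) - 2q \<psi>(q^8)\<close>: cubing it and reading off the exponents
      \<open>4n + s\<close> gives the four congruences, because \<open>-6 \<equiv> -1\<close>, \<open>12 \<equiv> 2\<close>, \<open>-8 \<equiv> -3 (mod 5)\<close>.
\<close>

section \<open>Dilation, congruences of power series and the Frobenius congruence\<close>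

definition dilate :: "nat \<Rightarrow> 'a::idom fps \<Rightarrow> 'a fps" where
  "dilate d f = fps_compose f (fps_X ^ d)"

lemma dilate_nth:
  assumes "0 < d"
  shows "fps_nth (dilate d f) n = (if d dvd n then fps_nth f (n div d) else 0)"
proof -
  have "fps_nth (dilate d f) n = (\<Sum>i = 0..n. fps_nth f i * (if n = d * i then 1 else 0))"
    unfolding dilate_def fps_compose_nth
    by (simp add: power_mult[symmetric] fps_X_power_nth mult.commute)
  also have "\<dots> = (\<Sum>i \<in> {0..n}. if i = n div d \<and> d dvd n then fps_nth f i else 0)"
    using assms by (intro sum.cong) (auto simp: mult.commute)
  also have "\<dots> = (if d dvd n then fps_nth f (n div d) else 0)"
    using assms by (auto simp: sum.delta' div_le_dividend)
  finally show ?thesis .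
qed

lemma dilate_mult: "0 < d \<Longrightarrow> dilate d (f * g) = dilate d f * dilate d g"
  unfolding dilate_def by (rule fps_compose_mult_distrib) simp

lemma dilate_add: "dilate d (f + g) = dilate d f + dilate d g"
  unfolding dilate_def by (rule fps_compose_add_distrib)

lemma dilate_power: "0 < d \<Longrightarrow> dilate d (f ^ k) = dilate d f ^ k"
  by (induction k) (simp_all add: dilate_mult[unfolded dilate_def] dilate_def)

lemma dilate_const: "0 < d \<Longrightarrow> dilate d (fps_const c) = fps_const c"
  by (rule fps_ext) (auto simp: dilate_nth)

lemma dilate_X: "0 < d \<Longrightarrow> dilate d fps_X = fps_X ^ d"
  by (rule fps_ext) (auto simp: dilate_nth fps_X_power_nth fps_X_nth)

lemma fps_numeral_mult_nth: "fps_nth (numeral k * (f :: 'a::comm_ring_1 fps)) n = numeral k * fps_nth f n"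
  by (simp add: numeral_fps_const fps_mult_left_const_nth)

definition fps_cong :: "int \<Rightarrow> int fps \<Rightarrow> int fps \<Rightarrow> bool" where
  "fps_cong m f g \<longleftrightarrow> (\<forall>n. [fps_nth f n = fps_nth g n] (mod m))"

lemma fps_cong_sym: "fps_cong m f g \<Longrightarrow> fps_cong m g f"
  by (simp add: fps_cong_def cong_sym_eq)

lemma fps_cong_trans [trans]: "fps_cong m f g \<Longrightarrow> fps_cong m g h \<Longrightarrow> fps_cong m f h"
  unfolding fps_cong_def using cong_trans by blast

lemma fps_cong_mult_left:
  assumes "fps_cong m f g"
  shows "fps_cong m (h * f) (h * g)"
  unfolding fps_cong_def fps_mult_nth
proof
  fix n
  show "[(\<Sum>i = 0..n. fps_nth h i * fps_nth f (n - i)) = (\<Sum>i = 0..n. fps_nth h i * fps_nth g (n - i))] (mod m)"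
    using assms unfolding fps_cong_def by (intro cong_sum cong_mult cong_refl) auto
qed

lemma fps_cong_multiple: "fps_cong m (g + fps_const m * h) g"
  by (simp add: fps_cong_def cong_def fps_mult_left_const_nth)

text \<open>In any commutative ring, \<open>(a + b)^p = a^p + b^p + p h\<close> for a prime \<open>p\<close>, since
  \<open>p\<close> divides the inner binomial coefficients.\<close>
lemma binomial_prime_split:
  fixes a b :: "'a::comm_ring_1"
  assumes "prime p"
  shows "\<exists>h. (a + b) ^ p = a ^ p + b ^ p + of_nat p * h"
proof -
  have p0: "0 < p" using assms prime_gt_0_nat by blast
  have mid: "of_nat (p choose k) = (of_nat p * of_nat ((p choose k) div p) :: 'a)"
    if "k \<in> {1..<p}" for k
    using dvd_choose_prime[of k p] that assms by (auto simp flip: of_nat_mult)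
  have "(a + b) ^ p = (\<Sum>k\<le>p. of_nat (p choose k) * a ^ k * b ^ (p - k))"
    by (rule binomial_ring)
  also have "{..p} = insert 0 (insert p {1..<p})" using p0 by auto
  also have "(\<Sum>k\<in>insert 0 (insert p {1..<p}). of_nat (p choose k) * a ^ k * b ^ (p - k))
      = b ^ p + a ^ p + (\<Sum>k\<in>{1..<p}. of_nat (p choose k) * a ^ k * b ^ (p - k))"
    using p0 by simp
  also have "(\<Sum>k\<in>{1..<p}. of_nat (p choose k) * a ^ k * b ^ (p - k))
      = of_nat p * (\<Sum>k\<in>{1..<p}. of_nat ((p choose k) div p) * a ^ k * b ^ (p - k))"
    unfolding sum_distrib_left by (intro sum.cong) (simp_all add: mid mult.assoc)
  finally have "(a + b) ^ p = a ^ p + b ^ p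
      + of_nat p * (\<Sum>k\<in>{1..<p}. of_nat ((p choose k) div p) * a ^ k * b ^ (p - k))"
    by (simp only: add.commute)
  then show ?thesis by blast
qed

lemma fermat_little_int:
  fixes c :: int
  assumes "prime p"
  shows "[c ^ p = c] (mod int p)"
proof -
  have nat_case: "[int k ^ p = int k] (mod int p)" for k
  proof (induction k)
    case 0
    have "0 < p" using assms prime_gt_0_nat by blast
    then show ?case by (simp add: power_0_left)
  next
    case (Suc k)
    obtain h where h: "(int k + 1) ^ p = int k ^ p + 1 ^ p + int p * h"
      using binomial_prime_split[OF assms] by blast
    have "[int p * h = 0] (mod int p)" by (simp add: cong_def)
    then have "[int k ^ p + 1 + int p * h = int k + 1 + 0] (mod int p)"
      using Suc.IH by (intro cong_add cong_refl)
    then have "[(int k + 1) ^ p = int k + 1] (mod int p)" using h by simp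
    then show ?case by (simp add: add.commute)
  qed
  have r: "[c mod int p = c] (mod int p)" by (simp add: cong_def)
  have "0 \<le> c mod int p" using assms prime_gt_0_nat by simp
  then have residue: "[(c mod int p) ^ p = c mod int p] (mod int p)"
    using nat_case[of "nat (c mod int p)"] by simp
  have "[c ^ p = (c mod int p) ^ p] (mod int p)" using r by (intro cong_pow) (rule cong_sym)
  also note residue
  also note r
  finally show ?thesis .
qed

text \<open>The Frobenius congruence \<open>f^p \<equiv> f(q^p) (mod p)\<close>, by induction on the coefficient index
  after writing \<open>f = c + q g\<close>.\<close>
theorem fps_frobenius:
  assumes "prime p"
  shows "fps_cong (int p) (f ^ p) (dilate p f)"
proof -
  have p0: "0 < p" using assms prime_gt_0_nat by blast
  have "\<forall>f. [fps_nth (f ^ p) n = fps_nth (dilate p f) n] (mod int p)" for n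
  proof (induction n rule: less_induct)
    case (less n)
    show ?case
    proof
      fix f :: "int fps"
      define c where "c = fps_nth f 0"
      define g where "g = Abs_fps (\<lambda>i. fps_nth f (Suc i))"
      have f: "f = fps_const c + fps_X * g"
        by (rule fps_ext) (simp add: c_def g_def fps_X_mult_nth)
      obtain h where h: "f ^ p = fps_const (c ^ p) + fps_X ^ p * g ^ p + fps_const (int p) * h"
        using binomial_prime_split[OF assms, of "fps_const c" "fps_X * g"]
        by (auto simp: f fps_const_power power_mult_distrib fps_of_nat)
      have d: "dilate p f = fps_const c + fps_X ^ p * dilate p g"
        unfolding f using p0 by (simp add: dilate_add dilate_mult dilate_const dilate_X)
      have const: "[fps_nth (fps_const (c ^ p)) n = fps_nth (fps_const c) n] (mod int p)"
        using fermat_little_int[OF assms] by simp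
      have shifted: "[fps_nth (fps_X ^ p * g ^ p) n = fps_nth (fps_X ^ p * dilate p g) n] (mod int p)"
      proof (cases "n < p")
        case False
        then show ?thesis using less.IH[of "n - p"] p0 by (simp add: fps_X_power_mult_nth)
      qed (simp add: fps_X_power_mult_nth)
      have "[fps_nth (f ^ p) n = fps_nth (fps_const (c ^ p) + fps_X ^ p * g ^ p) n] (mod int p)"
        unfolding h by (simp add: cong_def fps_mult_left_const_nth)
      also have "[fps_nth (fps_const (c ^ p) + fps_X ^ p * g ^ p) n = fps_nth (dilate p f) n] (mod int p)"
        unfolding d fps_add_nth by (rule cong_add[OF const shifted])
      finally show "[fps_nth (f ^ p) n = fps_nth (dilate p f) n] (mod int p)" .
    qed
  qed
  then show ?thesis by (simp add: fps_cong_def)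
qed

section \<open>Series indexed by weight functions\<close>

text \<open>Theta-type series are of this form, and products and substitutions of them become
  operations on the index sets.\<close>
definition finite_fibres :: "('a \<Rightarrow> nat) \<Rightarrow> bool" where
  "finite_fibres e \<longleftrightarrow> (\<forall>n. finite {k. e k = n})"

definition qseries :: "('a \<Rightarrow> nat) \<Rightarrow> ('a \<Rightarrow> int) \<Rightarrow> int fps" where
  "qseries e w = Abs_fps (\<lambda>n. \<Sum>k\<in>{k. e k = n}. w k)"

lemma qseries_nth: "fps_nth (qseries e w) n = (\<Sum>k\<in>{k. e k = n}. w k)"
  by (simp add: qseries_def)

lemma qseries_add: "qseries e w + qseries e w' = qseries e (\<lambda>k. w k + w' k)"
  by (rule fps_ext) (simp add: qseries_nth sum.distrib)

lemma qseries_uminus: "- qseries e w = qseries e (\<lambda>k. - w k)"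
  by (rule fps_ext) (simp add: qseries_nth sum_negf)

lemma qseries_shift: "fps_X ^ r * qseries e w = qseries (\<lambda>k. r + e k) w"
proof (rule fps_ext)
  fix n
  show "fps_nth (fps_X ^ r * qseries e w) n = fps_nth (qseries (\<lambda>k. r + e k) w) n"
  proof (cases "n < r")
    case True
    then have "{k. r + e k = n} = {}" by auto
    then show ?thesis using True by (simp add: fps_X_power_mult_nth qseries_nth)
  next
    case False
    then have "{k. r + e k = n} = {k. e k = n - r}" by auto
    then show ?thesis using False by (simp add: fps_X_power_mult_nth qseries_nth)
  qed
qed

lemma qseries_dilate:
  assumes "0 < d"
  shows "dilate d (qseries e w) = qseries (\<lambda>k. d * e k) w"
proof (rule fps_ext)
  fix n
  show "fps_nth (dilate d (qseries e w)) n = fps_nth (qseries (\<lambda>k. d * e k) w) n"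
  proof (cases "d dvd n")
    case True
    then have "{k. d * e k = n} = {k. e k = n div d}" using assms by auto
    then show ?thesis using True assms by (simp add: dilate_nth qseries_nth)
  next
    case False
    then have "{k. d * e k = n} = {}" by auto
    then show ?thesis using False assms by (simp add: dilate_nth qseries_nth)
  qed
qed

lemma finite_fibres_scale:
  assumes "finite_fibres e" "0 < d"
  shows "finite_fibres (\<lambda>k. d * e k)"
  unfolding finite_fibres_def
proof
  fix n
  have "{k. d * e k = n} \<subseteq> {k. e k = n div d}" using assms(2) by auto
  moreover have "finite {k. e k = n div d}" using assms(1) by (simp add: finite_fibres_def)
  ultimately show "finite {k. d * e k = n}" by (rule finite_subset)
qed

lemma finite_fibres_pair:
  assumes "finite_fibres e" "finite_fibres e'"
  shows "finite_fibres (\<lambda>(k, l). e k + e' l)"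
  unfolding finite_fibres_def
proof
  fix n
  have "{p. (\<lambda>(k, l). e k + e' l) p = n} \<subseteq> (\<Union>i\<in>{0..n}. {k. e k = i} \<times> {l. e' l = n - i})"
    by auto
  moreover have "finite (\<Union>i\<in>{0..n}. {k. e k = i} \<times> {l. e' l = n - i})"
    using assms unfolding finite_fibres_def by auto
  ultimately show "finite {p. (\<lambda>(k, l). e k + e' l) p = n}" by (rule finite_subset)
qed

lemma qseries_mult:
  assumes "finite_fibres e" "finite_fibres e'"
  shows "qseries e w * qseries e' w' = qseries (\<lambda>(k, l). e k + e' l) (\<lambda>(k, l). w k * w' l)"
proof (rule fps_ext)
  fix n
  have fe: "\<And>i. finite {k. e k = i}" and fe': "\<And>i. finite {k. e' k = i}"
    using assms unfolding finite_fibres_def by auto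
  let ?F = "\<lambda>i. {k. e k = i} \<times> {l. e' l = n - i}"
  have "fps_nth (qseries e w * qseries e' w') n =
     (\<Sum>i=0..n. (\<Sum>k\<in>{k. e k = i}. w k) * (\<Sum>l\<in>{l. e' l = n - i}. w' l))"
    by (simp add: fps_mult_nth qseries_nth)
  also have "\<dots> = (\<Sum>i=0..n. \<Sum>p\<in>?F i. w (fst p) * w' (snd p))"
    by (simp add: sum_product sum.cartesian_product case_prod_beta)
  also have "\<dots> = (\<Sum>p\<in>(\<Union>i\<in>{0..n}. ?F i). w (fst p) * w' (snd p))"
    by (rule sum.UNION_disjoint[symmetric]) (auto simp: fe fe')
  also have "(\<Union>i\<in>{0..n}. ?F i) = {p. (\<lambda>(k, l). e k + e' l) p = n}"
    by auto
  finally show "fps_nth (qseries e w * qseries e' w') n =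
      fps_nth (qseries (\<lambda>(k, l). e k + e' l) (\<lambda>(k, l). w k * w' l)) n"
    by (simp add: qseries_nth case_prod_beta)
qed

lemma qseries_reindex:
  assumes "finite_fibres e" "finite_fibres e'" "bij_betw h A B"
    and "\<And>k. k \<in> A \<Longrightarrow> e' (h k) = e k" "\<And>k. k \<in> A \<Longrightarrow> w' (h k) = w k"
    and "\<And>k. k \<notin> A \<Longrightarrow> w k = 0" "\<And>k. k \<notin> B \<Longrightarrow> w' k = 0"
  shows "qseries e w = qseries e' w'"
proof (rule fps_ext)
  fix n
  have fe: "finite {k. e k = n}" and fe': "finite {k. e' k = n}"
    using assms unfolding finite_fibres_def by auto
  have img: "h ` ({k. e k = n} \<inter> A) = {k. e' k = n} \<inter> B"
    using assms(3,4) by (force simp: bij_betw_def)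
  then have bij: "bij_betw h ({k. e k = n} \<inter> A) ({k. e' k = n} \<inter> B)"
    using assms(3) by (auto simp: bij_betw_def intro: inj_on_subset)
  have "(\<Sum>k\<in>{k. e k = n}. w k) = (\<Sum>k\<in>{k. e k = n} \<inter> A. w k)"
    by (rule sum.mono_neutral_right) (use fe assms in auto)
  also have "\<dots> = (\<Sum>k\<in>{k. e k = n} \<inter> A. w' (h k))"
    using assms(5) by simp
  also have "\<dots> = (\<Sum>k\<in>{k. e' k = n} \<inter> B. w' k)"
    by (rule sum.reindex_bij_betw[OF bij])
  also have "\<dots> = (\<Sum>k\<in>{k. e' k = n}. w' k)"
    by (rule sum.mono_neutral_left) (use fe' assms in auto)
  finally show "fps_nth (qseries e w) n = fps_nth (qseries e' w') n" by (simp add: qseries_nth)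
qed

section \<open>The product formula for overpartitions\<close>

text \<open>\<open>overpart_factor k = (1 + q^k)/(1 - q^k) = 1 + 2 \<Sum>\<^bsub>i \<ge> 1\<^esub> q^(ik)\<close>, and the truncated product
  \<open>\<Prod>\<^bsub>k \<le> m\<^esub>\<close> of these factors counts overpartitions with parts at most \<open>m\<close>.\<close>
definition overpart_factor :: "nat \<Rightarrow> int fps" where
  "overpart_factor k = Abs_fps (\<lambda>i. if i = 0 then 1 else if k dvd i then 2 else 0)"

definition overpart_prod :: "nat \<Rightarrow> int fps" where
  "overpart_prod m = (\<Prod>k=1..m. overpart_factor k)"

definition bounded_overpartitions :: "nat \<Rightarrow> nat \<Rightarrow> (nat multiset \<times> nat set) set" where
  "bounded_overpartitions m n = {(M, S) \<in> overpartitions n. \<forall>x\<in>#M. x \<le> m}"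

text \<open>Multiplying by \<open>overpart_factor k\<close> adds a choice of \<open>j\<close> copies of the part \<open>k\<close>
  (with two choices of overlining when \<open>j \<ge> 1\<close>).\<close>
lemma overpart_factor_mult_nth:
  assumes "0 < k"
  shows "fps_nth (P * overpart_factor k) n
       = (\<Sum>j=0..n div k. (if j = 0 then 1 else 2) * fps_nth P (n - j * k))"
proof -
  let ?c = "\<lambda>i. fps_nth (overpart_factor k) i * fps_nth P (n - i)"
  have vanish: "?c i = 0" if "i \<in> {0..n} - (\<lambda>j. j * k) ` {0..n div k}" for i
  proof -
    have "\<not> k dvd i"
    proof
      assume "k dvd i"
      then obtain j where j: "i = j * k" by (metis dvdE mult.commute)
      then have "j \<le> n div k" using that assms by (auto simp: less_eq_div_iff_mult_less_eq)
      then show False using that j by auto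
    qed
    then show ?thesis by (auto simp: overpart_factor_def)
  qed
  have "fps_nth (P * overpart_factor k) n = (\<Sum>i=0..n. ?c i)"
    by (subst mult.commute) (simp add: fps_mult_nth)
  also have "\<dots> = (\<Sum>i\<in>(\<lambda>j. j * k) ` {0..n div k}. ?c i)"
    by (rule sum.mono_neutral_right)
       (use assms vanish in \<open>auto simp: less_eq_div_iff_mult_less_eq\<close>)
  also have "\<dots> = (\<Sum>j=0..n div k. ?c (j * k))"
    by (subst sum.reindex) (auto simp: inj_on_def assms)
  also have "\<dots> = (\<Sum>j=0..n div k. (if j = 0 then 1 else 2) * fps_nth P (n - j * k))"
    using assms by (intro sum.cong) (auto simp: overpart_factor_def)
  finally show ?thesis .
qed

lemma overpart_factor_mult_poch:
  assumes "0 < k"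
  shows "overpart_factor k * (1 - fps_X ^ k) = 1 + fps_X ^ k"
proof (rule fps_ext)
  fix n
  have "fps_nth (overpart_factor k * (1 - fps_X ^ k)) n
      = fps_nth (overpart_factor k) n - fps_nth (fps_X ^ k * overpart_factor k) n"
    by (simp add: algebra_simps)
  also have "\<dots> = fps_nth (1 + fps_X ^ k) n"
    using assms by (auto simp: fps_X_power_mult_nth overpart_factor_def fps_X_power_nth dvd_minus_self)
  finally show "fps_nth (overpart_factor k * (1 - fps_X ^ k)) n = fps_nth (1 + fps_X ^ k) n" .
qed

lemma count_mult_le_sum_mset: "count M k * k \<le> sum_mset (M :: nat multiset)"
proof -
  have "sum_mset M = sum_mset (filter_mset (\<lambda>x. x = k) M) + sum_mset (filter_mset (\<lambda>x. x \<noteq> k) M)"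
    by (metis multiset_partition sum_mset.union)
  moreover have "filter_mset (\<lambda>x. x = k) M = replicate_mset (count M k) k"
    by (simp add: filter_eq_replicate_mset)
  ultimately show ?thesis by simp
qed

lemma bounded_overpartitions_0:
  "bounded_overpartitions 0 n = (if n = 0 then {({#}, {})} else {})"
proof -
  have "(M, S) \<in> bounded_overpartitions 0 n \<longleftrightarrow> n = 0 \<and> M = {#} \<and> S = {}" for M S
  proof
    assume a: "(M, S) \<in> bounded_overpartitions 0 n"
    then have "set_mset M = {}"
      unfolding bounded_overpartitions_def overpartitions_def by fastforce
    then show "n = 0 \<and> M = {#} \<and> S = {}"
      using a unfolding bounded_overpartitions_def overpartitions_def by auto
  next
    assume "n = 0 \<and> M = {#} \<and> S = {}"
    then show "(M, S) \<in> bounded_overpartitions 0 n"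
      by (simp add: bounded_overpartitions_def overpartitions_def)
  qed
  then show ?thesis by auto
qed

lemma bounded_overpartitions_no_largest_part:
  "(M, S) \<in> bounded_overpartitions m n
   \<Longrightarrow> (M, S) \<in> bounded_overpartitions (Suc m) n \<and> count M (Suc m) = 0 \<and> Suc m \<notin> S"
  unfolding bounded_overpartitions_def overpartitions_def by (fastforce simp: count_eq_zero_iff)

lemma bounded_overpartitions_drop_largest_part:
  assumes "(M, S) \<in> bounded_overpartitions (Suc m) n" "count M (Suc m) = j"
  shows "(M - replicate_mset j (Suc m), S - {Suc m}) \<in> bounded_overpartitions m (n - j * Suc m)"
proof -
  have sub: "replicate_mset j (Suc m) \<subseteq># M" using assms(2) by (auto simp: subseteq_mset_def)
  have "x \<in># M - replicate_mset j (Suc m) \<longleftrightarrow> x \<in># M \<and> x \<noteq> Suc m" for x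
    using assms(2) by (auto simp: in_diff_count)
  then show ?thesis using assms sub
    by (auto simp: bounded_overpartitions_def overpartitions_def sum_mset_diff le_Suc_eq)
qed

text \<open>Overpartitions with parts at most \<open>m+1\<close> and exactly \<open>j \<ge> 1\<close> parts equal to \<open>m+1\<close>
  correspond to pairs (overpartition of \<open>n - j(m+1)\<close> with parts at most \<open>m\<close>, overline flag
  of the part \<open>m+1\<close>).\<close>
definition remove_parts :: "nat \<Rightarrow> nat \<Rightarrow> nat multiset \<times> nat set \<Rightarrow> (nat multiset \<times> nat set) \<times> bool" where
  "remove_parts j k = (\<lambda>(M, S). ((M - replicate_mset j k, S - {k}), k \<in> S))"

definition insert_parts :: "nat \<Rightarrow> nat \<Rightarrow> (nat multiset \<times> nat set) \<times> bool \<Rightarrow> nat multiset \<times> nat set" where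
  "insert_parts j k = (\<lambda>((M, S), b). (M + replicate_mset j k, if b then insert k S else S))"

lemma bounded_overpartitions_split:
  assumes "1 \<le> j" "j * Suc m \<le> n"
  shows "bij_betw (remove_parts j (Suc m))
     {(M, S) \<in> bounded_overpartitions (Suc m) n. count M (Suc m) = j}
     (bounded_overpartitions m (n - j * Suc m) \<times> UNIV)"
proof (rule bij_betw_byWitness[where f' = "insert_parts j (Suc m)"])
  show "\<forall>a\<in>{(M, S) \<in> bounded_overpartitions (Suc m) n. count M (Suc m) = j}.
      insert_parts j (Suc m) (remove_parts j (Suc m) a) = a"
  proof
    fix a assume "a \<in> {(M, S) \<in> bounded_overpartitions (Suc m) n. count M (Suc m) = j}"
    then obtain M S where a: "a = (M, S)" "count M (Suc m) = j" by auto
    then have "replicate_mset j (Suc m) \<subseteq># M" by (auto simp: subseteq_mset_def)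
    then show "insert_parts j (Suc m) (remove_parts j (Suc m) a) = a"
      using a by (auto simp: insert_absorb remove_parts_def insert_parts_def)
  qed
  show "\<forall>a\<in>bounded_overpartitions m (n - j * Suc m) \<times> UNIV.
      remove_parts j (Suc m) (insert_parts j (Suc m) a) = a"
  proof
    fix a assume "a \<in> bounded_overpartitions m (n - j * Suc m) \<times> (UNIV :: bool set)"
    then obtain M S b where a: "a = ((M, S), b)" "(M, S) \<in> bounded_overpartitions m (n - j * Suc m)"
      by auto
    then have "Suc m \<notin> S" using bounded_overpartitions_no_largest_part by blast
    then show "remove_parts j (Suc m) (insert_parts j (Suc m) a) = a"
      using a(1) by (auto simp: remove_parts_def insert_parts_def)
  qed
  show "remove_parts j (Suc m) ` {(M, S) \<in> bounded_overpartitions (Suc m) n. count M (Suc m) = j}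
      \<subseteq> bounded_overpartitions m (n - j * Suc m) \<times> UNIV"
    using bounded_overpartitions_drop_largest_part by (auto simp: remove_parts_def)
  show "insert_parts j (Suc m) ` (bounded_overpartitions m (n - j * Suc m) \<times> UNIV)
      \<subseteq> {(M, S) \<in> bounded_overpartitions (Suc m) n. count M (Suc m) = j}"
  proof
    fix y assume "y \<in> insert_parts j (Suc m) ` (bounded_overpartitions m (n - j * Suc m) \<times> UNIV)"
    then obtain M S b where a: "(M, S) \<in> bounded_overpartitions m (n - j * Suc m)"
      and y: "y = insert_parts j (Suc m) ((M, S), b)" by auto
    have "count M (Suc m) = 0" using a bounded_overpartitions_no_largest_part by blast
    then show "y \<in> {(M, S) \<in> bounded_overpartitions (Suc m) n. count M (Suc m) = j}"
      using a assms y by (auto simp: bounded_overpartitions_def overpartitions_def insert_parts_def)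
  qed
qed

lemma card_bounded_overpartitions:
  "finite (bounded_overpartitions m n)
   \<and> int (card (bounded_overpartitions m n)) = fps_nth (overpart_prod m) n"
proof (induction m arbitrary: n)
  case 0
  then show ?case by (simp add: bounded_overpartitions_0 overpart_prod_def)
next
  case (Suc m)
  define T where "T j = {(M, S) \<in> bounded_overpartitions (Suc m) n. count M (Suc m) = j}" for j
  have "count M (Suc m) \<le> n div Suc m" if "(M, S) \<in> bounded_overpartitions (Suc m) n" for M S
    using that count_mult_le_sum_mset[of M "Suc m"]
    by (auto simp: bounded_overpartitions_def overpartitions_def less_eq_div_iff_mult_less_eq)
  then have U: "bounded_overpartitions (Suc m) n = (\<Union>j\<in>{0..n div Suc m}. T j)"
    unfolding T_def by fastforce
  have cT: "finite (T j)
      \<and> card (T j) = (if j = 0 then 1 else 2) * card (bounded_overpartitions m (n - j * Suc m))"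
    if "j \<in> {0..n div Suc m}" for j
  proof (cases "j = 0")
    case True
    have "(M, S) \<in> bounded_overpartitions (Suc m) n \<and> count M (Suc m) = 0
        \<longleftrightarrow> (M, S) \<in> bounded_overpartitions m n" for M S
      using bounded_overpartitions_no_largest_part[of M S m n]
      by (auto simp: bounded_overpartitions_def le_Suc_eq count_eq_zero_iff)
    then have "T 0 = bounded_overpartitions m n" unfolding T_def by auto
    then show ?thesis using Suc.IH[of n] True by simp
  next
    case False
    have "j * Suc m \<le> n" using that by (simp add: less_eq_div_iff_mult_less_eq)
    then have bij: "bij_betw (remove_parts j (Suc m))
       (T j) (bounded_overpartitions m (n - j * Suc m) \<times> UNIV)"
      using bounded_overpartitions_split[of j m n] False unfolding T_def by simp
    show ?thesis using bij_betw_finite[OF bij] bij_betw_same_card[OF bij] Suc.IH False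
      by (simp add: card_cartesian_product)
  qed
  have "card (bounded_overpartitions (Suc m) n) = (\<Sum>j\<in>{0..n div Suc m}. card (T j))"
    unfolding U by (rule card_UN_disjoint) (use cT in \<open>auto simp: T_def\<close>)
  then have "int (card (bounded_overpartitions (Suc m) n)) = (\<Sum>j=0..n div Suc m.
      (if j = 0 then 1 else 2) * int (card (bounded_overpartitions m (n - j * Suc m))))"
    using cT by (simp add: of_nat_sum) (rule sum.cong; simp)
  also have "\<dots> = fps_nth (overpart_prod m * overpart_factor (Suc m)) n"
    using Suc.IH by (simp add: overpart_factor_mult_nth)
  also have "overpart_prod m * overpart_factor (Suc m) = overpart_prod (Suc m)"
    unfolding overpart_prod_def by (simp add: prod.nat_ivl_Suc' mult.commute)
  finally show ?case using U cT by simp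
qed

definition overpart_fps :: "int fps" where
  "overpart_fps = Abs_fps (\<lambda>n. int (overpart n))"

lemma overpart_fps_nth_prod:
  assumes "n \<le> m"
  shows "fps_nth overpart_fps n = fps_nth (overpart_prod m) n"
proof -
  have "bounded_overpartitions m n = overpartitions n"
    using assms sum_mset.remove unfolding bounded_overpartitions_def overpartitions_def
    by fastforce
  then show ?thesis using card_bounded_overpartitions[of m n] by (simp add: overpart_def overpart_fps_def)
qed

section \<open>Truncated agreement and q-Pochhammer products\<close>

definition agree_below :: "nat \<Rightarrow> int fps \<Rightarrow> int fps \<Rightarrow> bool" where
  "agree_below M f g \<longleftrightarrow> (\<forall>i<M. fps_nth f i = fps_nth g i)"

lemma agree_below_refl [simp]: "agree_below M f f"
  by (simp add: agree_below_def)

lemma agree_below_sym: "agree_below M f g \<Longrightarrow> agree_below M g f"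
  by (simp add: agree_below_def)

lemma agree_below_trans [trans]: "agree_below M f g \<Longrightarrow> agree_below M g h \<Longrightarrow> agree_below M f h"
  by (simp add: agree_below_def)

lemma agree_below_mono: "agree_below M f g \<Longrightarrow> M' \<le> M \<Longrightarrow> agree_below M' f g"
  by (simp add: agree_below_def)

lemma agree_below_mult:
  "agree_below M f g \<Longrightarrow> agree_below M f' g' \<Longrightarrow> agree_below M (f * f') (g * g')"
  unfolding agree_below_def fps_mult_nth by (auto intro!: sum.cong)

lemma agree_below_sum:
  "finite A \<Longrightarrow> (\<And>a. a \<in> A \<Longrightarrow> agree_below M (f a) (g a))
   \<Longrightarrow> agree_below M (\<Sum>a\<in>A. f a) (\<Sum>a\<in>A. g a)"
  by (induction A rule: finite_induct) (auto simp: agree_below_def)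

lemma agree_below_shift: "agree_below M f g \<Longrightarrow> agree_below (M + k) (fps_X ^ k * f) (fps_X ^ k * g)"
  by (simp add: agree_below_def fps_X_power_mult_nth)

lemma agree_below_one_minus_X: "M \<le> k \<Longrightarrow> agree_below M (1 - fps_X ^ k) 1"
  by (simp add: agree_below_def fps_X_power_nth)

lemma agree_below_one_plus_X: "M \<le> k \<Longrightarrow> agree_below M (1 + fps_X ^ k) 1"
  by (simp add: agree_below_def fps_X_power_nth)

lemma agree_below_prod_extend:
  fixes a b :: nat
  assumes "a \<le> b" "\<And>k. a < k \<Longrightarrow> k \<le> b \<Longrightarrow> agree_below M (f k) 1"
  shows "agree_below M (\<Prod>k=1..b. f k) (\<Prod>k=1..a. f k)"
  using assms
proof (induction b rule: dec_induct)
  case (step b)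
  have "agree_below M ((\<Prod>k=1..b. f k) * f (Suc b)) ((\<Prod>k=1..a. f k) * 1)"
    using step by (intro agree_below_mult) auto
  then show ?case by (simp add: prod.nat_ivl_Suc')
qed simp

lemma agree_below_cancel:
  assumes "fps_nth u 0 = 1" "agree_below M (u * f) (u * g)"
  shows "agree_below M f g"
proof -
  define d where "d = f - g"
  have ud: "\<forall>i<M. fps_nth (u * d) i = 0"
    using assms(2) by (simp add: agree_below_def d_def algebra_simps)
  have "\<forall>i'\<le>i. i' < M \<longrightarrow> fps_nth d i' = 0" for i
  proof (induction i)
    case 0
    then show ?case using ud assms(1) by auto
  next
    case (Suc i)
    have "fps_nth d (Suc i) = 0" if "Suc i < M"
    proof -
      have "fps_nth (u * d) (Suc i) = (\<Sum>l=0..Suc i. fps_nth u l * fps_nth d (Suc i - l))"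
        by (simp add: fps_mult_nth)
      also have "\<dots> = fps_nth u 0 * fps_nth d (Suc i)
          + (\<Sum>l=Suc 0..Suc i. fps_nth u l * fps_nth d (Suc i - l))"
        by (simp add: sum.atLeast_Suc_atMost)
      also have "(\<Sum>l=Suc 0..Suc i. fps_nth u l * fps_nth d (Suc i - l)) = 0"
        using Suc.IH that by (intro sum.neutral) auto
      finally show ?thesis using ud that assms(1) by simp
    qed
    then show ?case using Suc.IH by (auto simp: le_Suc_eq)
  qed
  then show ?thesis by (auto simp: agree_below_def d_def)
qed

definition even_poch :: "nat \<Rightarrow> int fps" where
  "even_poch n = (\<Prod>i=1..n. 1 - fps_X ^ (2 * i))"

definition odd_poch :: "nat \<Rightarrow> int fps" where
  "odd_poch n = (\<Prod>k=1..n. 1 - fps_X ^ (2 * k - 1))"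

definition poch_minus :: "nat \<Rightarrow> int fps" where
  "poch_minus m = (\<Prod>k=1..m. 1 - fps_X ^ k)"

definition poch_plus :: "nat \<Rightarrow> int fps" where
  "poch_plus m = (\<Prod>k=1..m. 1 + fps_X ^ k)"

lemma even_poch_Suc: "even_poch (Suc n) = even_poch n * (1 - fps_X ^ (2 * Suc n))"
  unfolding even_poch_def by (simp add: prod.nat_ivl_Suc')

lemma odd_poch_Suc: "odd_poch (Suc n) = odd_poch n * (1 - fps_X ^ (2 * n + 1))"
  unfolding odd_poch_def by (simp add: prod.nat_ivl_Suc')

lemma poch_minus_Suc: "poch_minus (Suc m) = poch_minus m * (1 - fps_X ^ Suc m)"
  unfolding poch_minus_def by (simp add: prod.nat_ivl_Suc')

lemma poch_plus_Suc: "poch_plus (Suc m) = poch_plus m * (1 + fps_X ^ Suc m)"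
  unfolding poch_plus_def by (simp add: prod.nat_ivl_Suc')

lemma even_poch_nth0: "fps_nth (even_poch n) 0 = 1"
  by (induction n) (simp_all add: even_poch_Suc, simp add: even_poch_def)

lemma poch_minus_nth0: "fps_nth (poch_minus m) 0 = 1"
  by (induction m) (simp_all add: poch_minus_Suc, simp add: poch_minus_def)

lemma odd_poch_even_poch: "odd_poch n * even_poch n = poch_minus (2 * n)"
proof (induction n)
  case (Suc n)
  have "odd_poch (Suc n) * even_poch (Suc n)
      = (odd_poch n * even_poch n) * (1 - fps_X ^ (2 * n + 1)) * (1 - fps_X ^ (2 * Suc n))"
    by (simp add: odd_poch_Suc even_poch_Suc algebra_simps)
  also have "\<dots> = poch_minus (2 * Suc n)" using Suc.IH by (simp add: poch_minus_Suc)
  finally show ?case .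
qed (simp add: odd_poch_def even_poch_def poch_minus_def)

lemma poch_minus_poch_plus: "poch_minus m * poch_plus m = even_poch m"
proof (induction m)
  case (Suc m)
  have "(1 - fps_X ^ Suc m) * (1 + fps_X ^ Suc m) = (1 - fps_X ^ (2 * Suc m) :: int fps)"
    by (simp add: algebra_simps power_add[symmetric] mult_2)
  then have "poch_minus (Suc m) * poch_plus (Suc m)
      = (poch_minus m * poch_plus m) * (1 - fps_X ^ (2 * Suc m))"
    by (simp add: poch_minus_Suc poch_plus_Suc algebra_simps)
  then show ?case using Suc.IH by (simp add: even_poch_Suc)
qed (simp add: poch_minus_def poch_plus_def even_poch_def)

lemma overpart_prod_poch_minus: "overpart_prod m * poch_minus m = poch_plus m"
proof (induction m)
  case (Suc m)
  have "overpart_prod (Suc m) * poch_minus (Suc m)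
      = (overpart_prod m * poch_minus m) * (overpart_factor (Suc m) * (1 - fps_X ^ Suc m))"
    by (simp add: overpart_prod_def prod.nat_ivl_Suc' poch_minus_Suc algebra_simps)
  then show ?case using Suc.IH overpart_factor_mult_poch[of "Suc m"] by (simp add: poch_plus_Suc)
qed (simp add: overpart_prod_def poch_minus_def poch_plus_def)

lemma even_poch_agree: "a \<le> b \<Longrightarrow> agree_below (2 * a + 2) (even_poch b) (even_poch a)"
  unfolding even_poch_def using agree_below_one_minus_X
  by (intro agree_below_prod_extend) auto

lemma poch_minus_agree: "a \<le> b \<Longrightarrow> agree_below (a + 1) (poch_minus b) (poch_minus a)"
  unfolding poch_minus_def using agree_below_one_minus_X
  by (intro agree_below_prod_extend) auto

lemma poch_plus_agree: "a \<le> b \<Longrightarrow> agree_below (a + 1) (poch_plus b) (poch_plus a)"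
  unfolding poch_plus_def using agree_below_one_plus_X
  by (intro agree_below_prod_extend) auto

section \<open>Gaussian binomial coefficients in base \<open>q^2\<close>\<close>

text \<open>\<open>gbinom2 m r = [m, r]_(q^2)\<close>, defined by the Pascal recursion
  \<open>[m+1, r] = [m, r-1] + q^(2r) [m, r]\<close>.\<close>
fun gbinom2 :: "nat \<Rightarrow> int \<Rightarrow> int fps" where
  "gbinom2 0 r = (if r = 0 then 1 else 0)"
| "gbinom2 (Suc m) r = (if r < 0 then 0 else gbinom2 m (r - 1) + fps_X ^ (2 * nat r) * gbinom2 m r)"

lemma gbinom2_zero: "r < 0 \<or> r > int m \<Longrightarrow> gbinom2 m r = 0"
  by (induction m arbitrary: r) auto

lemma gbinom2_m0: "gbinom2 m 0 = 1"
  by (induction m) (auto simp: gbinom2_zero)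

lemma gbinom2_prod:
  "s \<le> m \<Longrightarrow> gbinom2 m (int s) * even_poch s * even_poch (m - s) = even_poch m"
proof (induction m arbitrary: s)
  case (Suc m)
  show ?case
  proof (cases s)
    case 0
    then show ?thesis by (simp add: gbinom2_m0 even_poch_def)
  next
    case (Suc t)
    have t: "t \<le> m" using Suc.prems Suc by simp
    have A: "gbinom2 m (int t) * even_poch (Suc t) * even_poch (m - t)
        = even_poch m * (1 - fps_X ^ (2 * Suc t))"
      using Suc.IH[OF t] by (simp add: even_poch_Suc algebra_simps)
    have B: "fps_X ^ (2 * Suc t) * gbinom2 m (int (Suc t)) * even_poch (Suc t) * even_poch (m - t)
        = fps_X ^ (2 * Suc t) * even_poch m - fps_X ^ (2 * Suc m) * even_poch m"
    proof (cases "t = m")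
      case False
      then have "m - t = Suc (m - Suc t)" using t by simp
      then have "fps_X ^ (2 * Suc t) * gbinom2 m (int (Suc t)) * even_poch (Suc t) * even_poch (m - t)
          = fps_X ^ (2 * Suc t) * (gbinom2 m (int (Suc t)) * even_poch (Suc t) * even_poch (m - Suc t))
            * (1 - fps_X ^ (2 * (m - t)))"
        by (simp add: even_poch_Suc algebra_simps)
      also have "\<dots> = fps_X ^ (2 * Suc t) * even_poch m * (1 - fps_X ^ (2 * (m - t)))"
        using Suc.IH[of "Suc t"] False t by simp
      also have "\<dots> = fps_X ^ (2 * Suc t) * even_poch m
          - (fps_X ^ (2 * Suc t) * fps_X ^ (2 * (m - t))) * even_poch m"
        by (simp add: algebra_simps)
      also have "fps_X ^ (2 * Suc t) * fps_X ^ (2 * (m - t)) = (fps_X :: int fps) ^ (2 * Suc m)"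
        using t by (simp add: power_add[symmetric])
      finally show ?thesis .
    qed (simp add: gbinom2_zero)
    have "gbinom2 (Suc m) (int s) = gbinom2 m (int t) + fps_X ^ (2 * Suc t) * gbinom2 m (int (Suc t))"
      using Suc by (simp add: nat_add_distrib)
    then have "gbinom2 (Suc m) (int s) * even_poch s * even_poch (Suc m - s)
        = gbinom2 m (int t) * even_poch (Suc t) * even_poch (m - t)
          + fps_X ^ (2 * Suc t) * gbinom2 m (int (Suc t)) * even_poch (Suc t) * even_poch (m - t)"
      using Suc by (simp add: algebra_simps)
    also have "\<dots> = even_poch m * (1 - fps_X ^ (2 * Suc m))"
      using A B by (simp add: algebra_simps)
    finally show ?thesis by (simp add: even_poch_Suc)
  qed
qed (simp add: even_poch_def)

text \<open>Symmetry, obtained by cancelling in the product formula; it yields the dual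
  Pascal recursion.\<close>
lemma gbinom2_symmetric: "gbinom2 m r = gbinom2 m (int m - r)"
proof (cases "0 \<le> r \<and> r \<le> int m")
  case True
  then obtain s where s: "r = int s" "s \<le> m" by (metis nat_0_le nat_le_iff)
  have "gbinom2 m r * (even_poch s * even_poch (m - s)) = even_poch m"
    using gbinom2_prod[OF s(2)] s(1) by (simp add: mult.assoc)
  also have "\<dots> = gbinom2 m (int m - r) * (even_poch s * even_poch (m - s))"
    using gbinom2_prod[of "m - s" m] s by (simp add: of_nat_diff ac_simps)
  finally show ?thesis
    using even_poch_nth0[of s] even_poch_nth0[of "m - s"] by (auto simp: fps_mult_nth_0)
qed (auto simp: gbinom2_zero)

lemma gbinom2_pascal_dual:
  "gbinom2 (Suc m) r = fps_X ^ (2 * nat (int m + 1 - r)) * gbinom2 m (r - 1) + gbinom2 m r"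
proof (cases "0 \<le> r \<and> r \<le> int m + 1")
  case True
  have "gbinom2 (Suc m) r = gbinom2 (Suc m) (int m + 1 - r)"
    by (subst gbinom2_symmetric) simp
  also have "\<dots> = gbinom2 m (int m - r) + fps_X ^ (2 * nat (int m + 1 - r)) * gbinom2 m (int m + 1 - r)"
    using True by simp
  also have "gbinom2 m (int m - r) = gbinom2 m r"
    by (subst gbinom2_symmetric) simp
  also have "gbinom2 m (int m + 1 - r) = gbinom2 m (r - 1)"
    by (subst gbinom2_symmetric) simp
  finally show ?thesis by simp
qed (auto simp: gbinom2_zero)

section \<open>The theta series \<open>\<phi>(-q)\<close> and a finite Jacobi triple product\<close>

definition alt_sign :: "int \<Rightarrow> int" where
  "alt_sign j = (if even j then 1 else -1)"

definition sqr :: "int \<Rightarrow> nat" where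
  "sqr j = nat (j ^ 2)"

definition phi_neg :: "int fps" where
  "phi_neg = qseries sqr alt_sign"

lemma alt_sign_pred: "alt_sign (j - 1) = - alt_sign j"
  and alt_sign_succ: "alt_sign (j + 1) = - alt_sign j"
  by (auto simp: alt_sign_def)

lemma sqr_abs: "sqr j = nat \<bar>j\<bar> * nat \<bar>j\<bar>"
  by (simp add: sqr_def power2_eq_square nat_mult_distrib[symmetric])

lemma sqr_large: "\<bar>k\<bar> > int n \<Longrightarrow> sqr k > 2 * n"
proof -
  assume "\<bar>k\<bar> > int n"
  then have "nat \<bar>k\<bar> * nat \<bar>k\<bar> \<ge> (n + 1) * (n + 1)" by (intro mult_le_mono) auto
  then show ?thesis by (simp add: sqr_abs algebra_simps)
qed

lemma finite_fibres_sqr: "finite_fibres sqr"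
  unfolding finite_fibres_def
proof
  fix n
  have "{k. sqr k = n} \<subseteq> {- int n..int n}"
  proof
    fix k assume "k \<in> {k. sqr k = n}"
    then have "\<not> \<bar>k\<bar> > int n" using sqr_large[of n k] by auto
    then show "k \<in> {- int n..int n}" by auto
  qed
  then show "finite {k. sqr k = n}" by (rule finite_subset) simp
qed

text \<open>Two Pascal steps combined: the recursion from \<open>[2n, n+j]\<close> to \<open>[2n+2, n+1+j]\<close>.\<close>
lemma gbinom2_three:
  "gbinom2 (Suc (Suc m)) (r + 1) = (1 + fps_X ^ (2 * Suc m)) * gbinom2 m r
     + fps_X ^ (2 * nat (int m + 1 - r)) * gbinom2 m (r - 1) + fps_X ^ (2 * nat (r + 1)) * gbinom2 m (r + 1)"
proof (cases "r + 1 < 0")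
  case False
  have A: "gbinom2 (Suc (Suc m)) (r + 1)
      = gbinom2 (Suc m) r + fps_X ^ (2 * nat (r + 1)) * gbinom2 (Suc m) (r + 1)"
    using False by simp
  have B: "gbinom2 (Suc m) (r + 1) = fps_X ^ (2 * nat (int m - r)) * gbinom2 m r + gbinom2 m (r + 1)"
    using gbinom2_pascal_dual[of m "r + 1"] by simp
  have C: "fps_X ^ (2 * nat (r + 1)) * (fps_X ^ (2 * nat (int m - r)) * gbinom2 m r)
      = fps_X ^ (2 * Suc m) * gbinom2 m r"
  proof (cases "0 \<le> r \<and> r \<le> int m")
    case True
    then have "int (2 * nat (r + 1) + 2 * nat (int m - r)) = int (2 * Suc m)" by simp
    then have "2 * nat (r + 1) + 2 * nat (int m - r) = 2 * Suc m" by (simp only: of_nat_eq_iff)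
    then show ?thesis by (metis mult.assoc power_add)
  qed (auto simp: gbinom2_zero)
  show ?thesis using A B C gbinom2_pascal_dual[of m r] by (simp add: algebra_simps)
qed (simp add: gbinom2_zero)

definition jacobi_term :: "nat \<Rightarrow> int \<Rightarrow> int fps" where
  "jacobi_term n j = fps_const (alt_sign j) * fps_X ^ sqr j * gbinom2 (2 * n) (int n + j)"

definition jacobi_sum :: "nat \<Rightarrow> int fps" where
  "jacobi_sum n = (\<Sum>j\<in>{- int n..int n}. jacobi_term n j)"

lemma jacobi_term_zero: "\<bar>j\<bar> > int n \<Longrightarrow> jacobi_term n j = 0"
proof -
  assume "\<bar>j\<bar> > int n"
  then have "int n + j < 0 \<or> int n + j > int (2 * n)" by auto
  then show ?thesis by (simp add: jacobi_term_def gbinom2_zero)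
qed

lemma jacobi_sum_wide:
  assumes "a \<le> - int n" "int n \<le> b"
  shows "(\<Sum>j\<in>{a..b}. jacobi_term n j) = jacobi_sum n"
  unfolding jacobi_sum_def by (rule sum.mono_neutral_right) (use assms jacobi_term_zero in auto)

lemma sum_shift_int: "(\<Sum>j\<in>{a..b}. f (j + c)) = (\<Sum>j\<in>{a+c..b+(c::int)}. f j)"
  by (rule sum.reindex_bij_witness[of _ "\<lambda>j. j - c" "\<lambda>j. j + c"]) auto

lemma jacobi_exponent_shift:
  assumes "0 \<le> r \<Longrightarrow> r \<le> int (2 * n) \<Longrightarrow> sqr j + e = 2 * n + 1 + sqr j'" and "r = int n + j'"
  shows "fps_X ^ sqr j * (fps_X ^ e * gbinom2 (2 * n) r)
       = fps_X ^ (2 * n + 1) * (fps_X ^ sqr j' * gbinom2 (2 * n) (int n + j'))"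
proof (cases "0 \<le> r \<and> r \<le> int (2 * n)")
  case True
  then have exponents: "fps_X ^ sqr j * fps_X ^ e = (fps_X :: int fps) ^ (2 * n + 1) * fps_X ^ sqr j'"
    using assms(1) by (simp flip: power_add)
  have "fps_X ^ sqr j * (fps_X ^ e * gbinom2 (2 * n) r) = (fps_X ^ sqr j * fps_X ^ e) * gbinom2 (2 * n) r"
    by (simp only: mult.assoc)
  also have "\<dots> = fps_X ^ (2 * n + 1) * (fps_X ^ sqr j' * gbinom2 (2 * n) (int n + j'))"
    by (simp only: exponents assms(2) mult.assoc)
  finally show ?thesis .
qed (use assms(2) gbinom2_zero in auto)

lemma sqr_step_down:
  assumes "int n + j - 1 \<le> int (2 * n)"
  shows "sqr j + 2 * nat (int (2 * n) + 1 - (int n + j)) = 2 * n + 1 + sqr (j - 1)"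
proof -
  have "int (sqr j + 2 * nat (int (2 * n) + 1 - (int n + j))) = j ^ 2 + 2 * (int n + 1 - j)"
    using assms by (simp add: sqr_def)
  also have "\<dots> = int (2 * n + 1) + (j - 1) ^ 2"
    by (simp add: power2_eq_square algebra_simps)
  also have "\<dots> = int (2 * n + 1 + sqr (j - 1))"
    by (simp add: sqr_def)
  finally show ?thesis by (simp only: of_nat_eq_iff)
qed

lemma sqr_step_up:
  assumes "0 \<le> int n + j + 1"
  shows "sqr j + 2 * nat (int n + j + 1) = 2 * n + 1 + sqr (j + 1)"
proof -
  have "int (sqr j + 2 * nat (int n + j + 1)) = j ^ 2 + 2 * (int n + j + 1)"
    using assms by (simp add: sqr_def)
  also have "\<dots> = int (2 * n + 1) + (j + 1) ^ 2"
    by (simp add: power2_eq_square algebra_simps)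
  also have "\<dots> = int (2 * n + 1 + sqr (j + 1))"
    by (simp add: sqr_def)
  finally show ?thesis by (simp only: of_nat_eq_iff)
qed

lemma jacobi_term_step:
  "jacobi_term (Suc n) j = (1 + fps_X ^ (4 * n + 2)) * jacobi_term n j
     - fps_X ^ (2 * n + 1) * jacobi_term n (j - 1) - fps_X ^ (2 * n + 1) * jacobi_term n (j + 1)"
proof -
  let ?g = "gbinom2 (2 * n)"
  have recursion: "gbinom2 (2 * Suc n) (int (Suc n) + j) = (1 + fps_X ^ (4 * n + 2)) * ?g (int n + j)
     + fps_X ^ (2 * nat (int (2 * n) + 1 - (int n + j))) * ?g (int n + j - 1)
     + fps_X ^ (2 * nat (int n + j + 1)) * ?g (int n + j + 1)"
    using gbinom2_three[of "2 * n" "int n + j"] by (simp add: algebra_simps)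
  have down: "fps_X ^ sqr j * (fps_X ^ (2 * nat (int (2 * n) + 1 - (int n + j))) * ?g (int n + j - 1))
     = fps_X ^ (2 * n + 1) * (fps_X ^ sqr (j - 1) * ?g (int n + (j - 1)))"
    by (rule jacobi_exponent_shift) (rule sqr_step_down, simp_all)
  have up: "fps_X ^ sqr j * (fps_X ^ (2 * nat (int n + j + 1)) * ?g (int n + j + 1))
     = fps_X ^ (2 * n + 1) * (fps_X ^ sqr (j + 1) * ?g (int n + (j + 1)))"
    by (rule jacobi_exponent_shift) (rule sqr_step_up, simp_all)
  have "jacobi_term (Suc n) j = fps_const (alt_sign j)
     * ((1 + fps_X ^ (4 * n + 2)) * (fps_X ^ sqr j * ?g (int n + j))
        + fps_X ^ sqr j * (fps_X ^ (2 * nat (int (2 * n) + 1 - (int n + j))) * ?g (int n + j - 1))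
        + fps_X ^ sqr j * (fps_X ^ (2 * nat (int n + j + 1)) * ?g (int n + j + 1)))"
    unfolding jacobi_term_def recursion by (simp add: algebra_simps)
  also have "\<dots> = (1 + fps_X ^ (4 * n + 2)) * jacobi_term n j
    - fps_X ^ (2 * n + 1) * jacobi_term n (j - 1) - fps_X ^ (2 * n + 1) * jacobi_term n (j + 1)"
  proof -
    have neg: "fps_const (- c) = - fps_const c" for c :: int by simp
    show ?thesis unfolding down up jacobi_term_def alt_sign_pred alt_sign_succ neg
      by (simp add: algebra_simps del: fps_const_neg)
  qed
  finally show ?thesis .
qed

text \<open>Each step multiplies the sum by \<open>(1 - q^(2n+1))^2\<close>.\<close>
theorem finite_jacobi_triple_product: "jacobi_sum n = odd_poch n ^ 2"
proof (induction n)
  case 0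
  then show ?case by (simp add: jacobi_sum_def odd_poch_def jacobi_term_def sqr_def alt_sign_def gbinom2_m0)
next
  case (Suc n)
  let ?I = "{- int (Suc n)..int (Suc n)}"
  have same: "(\<Sum>j\<in>?I. jacobi_term n j) = jacobi_sum n" by (rule jacobi_sum_wide) auto
  have left: "(\<Sum>j\<in>?I. jacobi_term n (j - 1)) = jacobi_sum n"
  proof -
    have "(\<Sum>j\<in>?I. jacobi_term n (j - 1)) = (\<Sum>j\<in>?I. jacobi_term n (j + -1))" by simp
    also have "\<dots> = (\<Sum>j\<in>{- int (Suc n) + -1..int (Suc n) + -1}. jacobi_term n j)"
      by (rule sum_shift_int)
    also have "\<dots> = jacobi_sum n" by (rule jacobi_sum_wide) auto
    finally show ?thesis .
  qed
  have right: "(\<Sum>j\<in>?I. jacobi_term n (j + 1)) = jacobi_sum n"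
  proof -
    have "(\<Sum>j\<in>?I. jacobi_term n (j + 1)) = (\<Sum>j\<in>{- int (Suc n) + 1..int (Suc n) + 1}. jacobi_term n j)"
      by (rule sum_shift_int)
    also have "\<dots> = jacobi_sum n" by (rule jacobi_sum_wide) auto
    finally show ?thesis .
  qed
  have "jacobi_sum (Suc n) = (\<Sum>j\<in>?I. (1 + fps_X ^ (4 * n + 2)) * jacobi_term n j
      - fps_X ^ (2 * n + 1) * jacobi_term n (j - 1) - fps_X ^ (2 * n + 1) * jacobi_term n (j + 1))"
    unfolding jacobi_sum_def jacobi_term_step by simp
  also have "\<dots> = (1 + fps_X ^ (4 * n + 2)) * jacobi_sum n
      - fps_X ^ (2 * n + 1) * jacobi_sum n - fps_X ^ (2 * n + 1) * jacobi_sum n"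
    by (simp only: sum_subtractf sum_distrib_left[symmetric] same left right)
  also have "\<dots> = (1 - fps_X ^ (2 * n + 1)) ^ 2 * jacobi_sum n"
  proof -
    have "(fps_X :: int fps) ^ (4 * n + 2) = fps_X ^ (2 * n + 1) * fps_X ^ (2 * n + 1)"
      by (simp add: power_add[symmetric])
    then show ?thesis by (simp add: power2_eq_square algebra_simps)
  qed
  finally show ?case using Suc.IH by (simp add: odd_poch_Suc power_mult_distrib)
qed

section \<open>Gauss' identity \<open>G(q) \<phi>(-q) = 1\<close>\<close>

text \<open>\<open>[2n, n+j]_(q^2) (q^2;q^2)_n \<equiv> 1\<close> below degree \<open>2(n - |j|) + 2\<close>, so each Jacobi term times
  \<open>(q^2;q^2)_n\<close> is \<open>(-1)^j q^(j^2)\<close> below degree \<open>2n + 1\<close>.\<close>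
lemma gbinom2_times_even_poch_agree:
  assumes "\<bar>j\<bar> \<le> int n"
  shows "agree_below (2 * (n - nat \<bar>j\<bar>) + 2) (gbinom2 (2 * n) (int n + j) * even_poch n) 1"
proof -
  define s where "s = nat (int n + j)"
  define a where "a = n - nat \<bar>j\<bar>"
  have s: "int s = int n + j" "s \<le> 2 * n" using assms by (auto simp: s_def)
  have a: "a \<le> s" "a \<le> 2 * n - s" "a \<le> 2 * n" "a \<le> n" using assms s by (auto simp: a_def)
  let ?M = "2 * a + 2" and ?g = "gbinom2 (2 * n) (int s)"
  have "agree_below ?M (?g * even_poch s * even_poch (2 * n - s)) (?g * even_poch a * even_poch a)"
    using even_poch_agree a by (intro agree_below_mult) auto
  then have "agree_below ?M (even_poch (2 * n)) (?g * even_poch a * even_poch a)"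
    by (simp only: gbinom2_prod s(2))
  then have "agree_below ?M (?g * even_poch a * even_poch a) (even_poch a)"
    using even_poch_agree[OF a(3)] agree_below_sym agree_below_trans by blast
  moreover have "?g * even_poch a * even_poch a = even_poch a * (?g * even_poch a)"
    by (simp only: ac_simps)
  ultimately have "agree_below ?M (even_poch a * (?g * even_poch a)) (even_poch a * 1)" by simp
  then have "agree_below ?M (?g * even_poch a) 1" by (rule agree_below_cancel[OF even_poch_nth0])
  moreover have "agree_below ?M (?g * even_poch n) (?g * even_poch a)"
    by (rule agree_below_mult[OF agree_below_refl even_poch_agree[OF a(4)]])
  ultimately have "agree_below ?M (?g * even_poch n) 1" by (rule agree_below_trans[rotated])
  then show ?thesis using s(1) by (simp add: a_def)
qed

lemma jacobi_term_agree:
  assumes "\<bar>j\<bar> \<le> int n"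
  shows "agree_below (2 * n + 1) (jacobi_term n j * even_poch n) (fps_const (alt_sign j) * fps_X ^ sqr j)"
proof -
  have "agree_below (2 * (n - nat \<bar>j\<bar>) + 2 + sqr j)
      (fps_X ^ sqr j * (gbinom2 (2 * n) (int n + j) * even_poch n)) (fps_X ^ sqr j * 1)"
    by (rule agree_below_shift[OF gbinom2_times_even_poch_agree[OF assms]])
  moreover have "2 * n + 1 \<le> 2 * (n - nat \<bar>j\<bar>) + 2 + sqr j"
    using assms by (cases "nat \<bar>j\<bar>") (simp_all add: sqr_abs algebra_simps)
  ultimately have "agree_below (2 * n + 1)
      (fps_X ^ sqr j * (gbinom2 (2 * n) (int n + j) * even_poch n)) (fps_X ^ sqr j * 1)"
    by (rule agree_below_mono)
  then have "agree_below (2 * n + 1)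
      (fps_const (alt_sign j) * (fps_X ^ sqr j * (gbinom2 (2 * n) (int n + j) * even_poch n)))
      (fps_const (alt_sign j) * (fps_X ^ sqr j * 1))"
    by (rule agree_below_mult[OF agree_below_refl])
  then show ?thesis by (simp add: jacobi_term_def mult.assoc)
qed

lemma phi_neg_agree_partial_sum:
  "agree_below (2 * n + 1) phi_neg (\<Sum>j\<in>{- int n..int n}. fps_const (alt_sign j) * fps_X ^ sqr j)"
  unfolding agree_below_def
proof (intro allI impI)
  fix i assume i: "i < 2 * n + 1"
  have sub: "{k. sqr k = i} \<subseteq> {- int n..int n}"
  proof
    fix k assume "k \<in> {k. sqr k = i}"
    then have "\<not> \<bar>k\<bar> > int n" using sqr_large[of n k] i by auto
    then show "k \<in> {- int n..int n}" by auto
  qed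
  have "fps_nth (\<Sum>j\<in>{- int n..int n}. fps_const (alt_sign j) * fps_X ^ sqr j) i
      = (\<Sum>j\<in>{- int n..int n}. if sqr j = i then alt_sign j else 0)"
    by (simp add: fps_sum_nth fps_mult_left_const_nth fps_X_power_nth eq_commute if_distrib cong: if_cong)
  also have "\<dots> = (\<Sum>j\<in>{- int n..int n} \<inter> {k. sqr k = i}. alt_sign j)"
    by (simp add: sum.inter_restrict)
  also have "{- int n..int n} \<inter> {k. sqr k = i} = {k. sqr k = i}" using sub by blast
  finally show "fps_nth phi_neg i
      = fps_nth (\<Sum>j\<in>{- int n..int n}. fps_const (alt_sign j) * fps_X ^ sqr j) i"
    by (simp add: phi_neg_def qseries_nth)
qed

lemma phi_neg_agree_product: "agree_below (2 * n + 1) phi_neg (odd_poch n ^ 2 * even_poch n)"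
proof -
  have "agree_below (2 * n + 1) (\<Sum>j\<in>{- int n..int n}. jacobi_term n j * even_poch n)
      (\<Sum>j\<in>{- int n..int n}. fps_const (alt_sign j) * fps_X ^ sqr j)"
  proof (rule agree_below_sum)
    fix j assume "j \<in> {- int n..int n}"
    then have "\<bar>j\<bar> \<le> int n" by auto
    then show "agree_below (2 * n + 1) (jacobi_term n j * even_poch n) (fps_const (alt_sign j) * fps_X ^ sqr j)"
      by (rule jacobi_term_agree)
  qed simp
  then have "agree_below (2 * n + 1) (jacobi_sum n * even_poch n) phi_neg"
    unfolding jacobi_sum_def sum_distrib_right
    using phi_neg_agree_partial_sum agree_below_sym agree_below_trans by blast
  then show ?thesis using finite_jacobi_triple_product agree_below_sym by simp
qed

text \<open>\<open>\<phi>(-q) (-q;q)_m \<equiv> (q;q)_m\<close> below degree \<open>m + 1\<close>, using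
  \<open>(q;q^2)_n (q^2;q^2)_n = (q;q)_(2n)\<close> and \<open>(q;q)_m (-q;q)_m = (q^2;q^2)_m\<close>.\<close>
lemma phi_neg_times_poch_plus:
  "agree_below (m + 1) (phi_neg * poch_plus m) (poch_minus m)"
proof -
  have odd_plus: "agree_below (2 * m + 2) (odd_poch m * poch_plus (2 * m)) 1"
  proof -
    have "even_poch m * (odd_poch m * poch_plus (2 * m)) = (odd_poch m * even_poch m) * poch_plus (2 * m)"
      by (simp only: ac_simps)
    also have "\<dots> = even_poch (2 * m)" by (simp only: odd_poch_even_poch poch_minus_poch_plus)
    finally have "even_poch m * (odd_poch m * poch_plus (2 * m)) = even_poch (2 * m)" .
    then have "agree_below (2 * m + 2) (even_poch m * (odd_poch m * poch_plus (2 * m))) (even_poch m * 1)"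
      using even_poch_agree[of m "2 * m"] by simp
    then show ?thesis by (rule agree_below_cancel[OF even_poch_nth0])
  qed
  have "agree_below (2 * m + 1) (phi_neg * poch_plus (2 * m))
      ((odd_poch m * even_poch m) * (odd_poch m * poch_plus (2 * m)))"
    using agree_below_mult[OF phi_neg_agree_product agree_below_refl, of m "poch_plus (2 * m)"]
    by (simp only: power2_eq_square ac_simps)
  also have "agree_below (2 * m + 1) ((odd_poch m * even_poch m) * (odd_poch m * poch_plus (2 * m)))
      (poch_minus (2 * m) * 1)"
    unfolding odd_poch_even_poch
    by (rule agree_below_mult[OF agree_below_refl agree_below_mono[OF odd_plus]]) simp
  finally have "agree_below (m + 1) (phi_neg * poch_plus (2 * m)) (poch_minus (2 * m))"
    using agree_below_mono by fastforce
  moreover have "agree_below (m + 1) (phi_neg * poch_plus m) (phi_neg * poch_plus (2 * m))"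
    by (rule agree_below_mult[OF agree_below_refl agree_below_sym[OF poch_plus_agree]]) simp
  moreover have "agree_below (m + 1) (poch_minus (2 * m)) (poch_minus m)"
    by (rule poch_minus_agree) simp
  ultimately show ?thesis using agree_below_trans by blast
qed

theorem overpart_fps_times_phi_neg: "overpart_fps * phi_neg = 1"
proof (rule fps_ext)
  fix m
  have "agree_below (m + 1) (poch_minus m * (phi_neg * overpart_prod m)) (poch_minus m * 1)"
    using phi_neg_times_poch_plus[of m] overpart_prod_poch_minus[of m] by (simp add: algebra_simps)
  then have "agree_below (m + 1) (phi_neg * overpart_prod m) 1"
    by (rule agree_below_cancel[OF poch_minus_nth0])
  moreover have "agree_below (m + 1) overpart_fps (overpart_prod m)"
    unfolding agree_below_def using overpart_fps_nth_prod by simp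
  then have "agree_below (m + 1) (overpart_fps * phi_neg) (overpart_prod m * phi_neg)"
    by (rule agree_below_mult[OF _ agree_below_refl])
  ultimately have "agree_below (m + 1) (overpart_fps * phi_neg) 1"
    by (simp add: mult.commute agree_below_trans)
  then show "fps_nth (overpart_fps * phi_neg) m = fps_nth 1 m" by (simp add: agree_below_def)
qed

section \<open>Sections of power series\<close>

definition dsection :: "nat \<Rightarrow> int fps \<Rightarrow> int fps" where
  "dsection d f = Abs_fps (\<lambda>n. if d dvd n then fps_nth f n else 0)"

definition supported_mod :: "nat \<Rightarrow> nat \<Rightarrow> int fps \<Rightarrow> bool" where
  "supported_mod d r f \<longleftrightarrow> (\<forall>n. fps_nth f n \<noteq> 0 \<longrightarrow> n mod d = r)"

lemma dsection_add: "dsection d (f + g) = dsection d f + dsection d g"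
  by (rule fps_ext) (simp add: dsection_def)

lemma dsection_numeral: "dsection d (numeral k * f) = numeral k * dsection d f"
  by (rule fps_ext) (simp add: dsection_def fps_numeral_mult_nth)

lemma dsection_fps_cong: "fps_cong m f g \<Longrightarrow> fps_cong m (dsection d f) (dsection d g)"
  by (simp add: fps_cong_def dsection_def)

lemma dsection_dilate_mult:
  assumes "0 < d"
  shows "dsection d (dilate d h * f) = dilate d h * dsection d f"
proof (rule fps_ext)
  fix n
  have "fps_nth (dilate d h) i * (if d dvd n - i then fps_nth f (n - i) else 0)
      = (if d dvd n then fps_nth (dilate d h) i * fps_nth f (n - i) else 0)" if "i \<le> n" for i
  proof (cases "d dvd i")
    case True
    then have "d dvd n - i \<longleftrightarrow> d dvd n" using that by (metis dvd_add_left_iff le_add_diff_inverse2)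
    then show ?thesis by simp
  qed (simp add: dilate_nth assms)
  then show "fps_nth (dsection d (dilate d h * f)) n = fps_nth (dilate d h * dsection d f) n"
    by (simp add: dsection_def fps_mult_nth)
qed

lemma supported_mod_mult:
  assumes "supported_mod d r f" "supported_mod d s g"
  shows "supported_mod d ((r + s) mod d) (f * g)"
  unfolding supported_mod_def
proof (intro allI impI)
  fix n assume "fps_nth (f * g) n \<noteq> 0"
  then obtain i where i: "i \<in> {0..n}" "fps_nth f i * fps_nth g (n - i) \<noteq> 0"
    unfolding fps_mult_nth by (rule sum.not_neutral_contains_not_neutral) blast
  then have "i mod d = r" "(n - i) mod d = s" using assms unfolding supported_mod_def by auto
  moreover have "n = i + (n - i)" using i by simp
  ultimately show "n mod d = (r + s) mod d" by (metis mod_add_eq)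
qed

lemma supported_mod_power: "supported_mod d r f \<Longrightarrow> supported_mod d ((r * k) mod d) (f ^ k)"
proof (induction k)
  case (Suc k)
  then have "supported_mod d ((r + (r * k) mod d) mod d) (f * f ^ k)"
    by (intro supported_mod_mult) auto
  then show ?case by (simp add: mod_add_right_eq algebra_simps)
qed (simp add: supported_mod_def)

lemma dsection_supported_zero: "supported_mod d 0 f \<Longrightarrow> dsection d f = f"
  by (rule fps_ext) (auto simp: supported_mod_def dsection_def)

lemma dsection_supported_nonzero: "supported_mod d r f \<Longrightarrow> r \<noteq> 0 \<Longrightarrow> dsection d f = 0"
  by (rule fps_ext) (auto simp: supported_mod_def dsection_def)

lemma qseries_supported_mod:
  "(\<And>k. w k \<noteq> 0 \<Longrightarrow> e k mod d = r) \<Longrightarrow> supported_mod d r (qseries e w)"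
  unfolding supported_mod_def qseries_nth
  by (metis (mono_tags, lifting) mem_Collect_eq sum.not_neutral_contains_not_neutral)

section \<open>The 5-dissection of \<open>\<phi>(-q)\<close> and the lattice identity\<close>

text \<open>With
  \<open>A = phi_part {0}\<close>, \<open>B = phi_part {1,4}\<close>, \<open>C = phi_part {2,3}\<close>, the exponents of \<open>A\<close>, \<open>B\<close>, \<open>C\<close>
  are \<open>\<equiv> 0, 1, 4 (mod 5)\<close>.\<close>
definition residue_weight :: "int set \<Rightarrow> int \<Rightarrow> int" where
  "residue_weight R k = (if k mod 5 \<in> R then alt_sign k else 0)"

definition phi_part :: "int set \<Rightarrow> int fps" where
  "phi_part R = qseries sqr (residue_weight R)"

lemma phi_neg_5_dissection: "phi_neg = phi_part {0} + phi_part {1, 4} + phi_part {2, 3}"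
proof -
  have "alt_sign k = residue_weight {0} k + residue_weight {1, 4} k + residue_weight {2, 3} k" for k
  proof -
    have "k mod 5 \<in> {0, 1, 2, 3, 4}" by auto
    then show ?thesis by (auto simp: residue_weight_def)
  qed
  then show ?thesis unfolding phi_neg_def phi_part_def qseries_add
    by (intro arg_cong[where f = "qseries sqr"] ext) simp
qed

lemma sqr_mod_5: "int (sqr k mod 5) = (k mod 5) ^ 2 mod 5"
  by (simp add: sqr_def zmod_int power_mod)

lemma phi_part_supported:
  assumes "\<And>k. k mod 5 \<in> R \<Longrightarrow> (k mod 5) ^ 2 mod 5 = int r"
  shows "supported_mod 5 r (phi_part R)"
  unfolding phi_part_def
proof (rule qseries_supported_mod)
  fix k assume "residue_weight R k \<noteq> 0"
  then have "k mod 5 \<in> R" by (auto simp: residue_weight_def split: if_splits)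
  then have "int (sqr k mod 5) = int r" using assms by (simp add: sqr_mod_5)
  then show "sqr k mod 5 = r" by (simp only: of_nat_eq_iff)
qed

lemma phi_part_0_supported: "supported_mod 5 0 (phi_part {0})"
  and phi_part_14_supported: "supported_mod 5 1 (phi_part {1, 4})"
  and phi_part_23_supported: "supported_mod 5 4 (phi_part {2, 3})"
  by (auto intro!: phi_part_supported)

text \<open>\<open>(u, v) \<mapsto> (u + 2v, 2u - v)\<close> maps \<open>\<int>^2\<close> bijectively onto the pairs with
  \<open>x + 2y \<equiv> 0 (mod 5)\<close> and multiplies \<open>x^2 + y^2\<close> by 5; swapping the entries when
  \<open>x \<equiv> \<plusminus>2\<close> normalises such pairs to those counted by \<open>A^2 + BC\<close>.\<close>
definition lattice5 :: "(int \<times> int) set" where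
  "lattice5 = {(x, y). 5 dvd x + 2 * y}"

definition rot5 :: "int \<times> int \<Rightarrow> int \<times> int" where
  "rot5 = (\<lambda>(u, v). (u + 2 * v, 2 * u - v))"

definition normal_pairs :: "(int \<times> int) set" where
  "normal_pairs = {(x, y). (x mod 5 = 0 \<and> y mod 5 = 0) \<or> (x mod 5 \<in> {1, 4} \<and> y mod 5 \<in> {2, 3})}"

definition normalize5 :: "int \<times> int \<Rightarrow> int \<times> int" where
  "normalize5 = (\<lambda>(x, y). if x mod 5 \<in> {2, 3} then (y, x) else (x, y))"

lemma dvd_5_residues:
  "(5::int) dvd x + 2 * y \<longleftrightarrow> (x mod 5 = 0 \<and> y mod 5 = 0) \<or> (x mod 5 = 1 \<and> y mod 5 = 2)
     \<or> (x mod 5 = 2 \<and> y mod 5 = 4) \<or> (x mod 5 = 3 \<and> y mod 5 = 1) \<or> (x mod 5 = 4 \<and> y mod 5 = 3)"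
  by presburger

lemma bij_rot5: "bij_betw rot5 UNIV lattice5"
proof (rule bij_betw_byWitness[where f' = "\<lambda>(x, y). ((x + 2 * y) div 5, (2 * x - y) div 5)"])
  show "\<forall>p\<in>UNIV. (\<lambda>(x, y). ((x + 2 * y) div 5, (2 * x - y) div 5)) (rot5 p) = p"
    by (auto simp: rot5_def)
  show "\<forall>q\<in>lattice5. rot5 ((\<lambda>(x, y). ((x + 2 * y) div 5, (2 * x - y) div 5)) q) = q"
  proof
    fix q assume "q \<in> lattice5"
    then obtain x y t where q: "q = (x, y)" "x + 2 * y = 5 * t"
      by (auto simp: lattice5_def elim!: dvdE)
    then have "2 * x - y = 5 * (2 * t - y)" by simp
    then have "(2 * x - y) div 5 = 2 * t - y" "(x + 2 * y) div 5 = t" using q(2) by simp_all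
    then show "rot5 ((\<lambda>(x, y). ((x + 2 * y) div 5, (2 * x - y) div 5)) q) = q"
      using q by (simp add: rot5_def)
  qed
  show "rot5 ` UNIV \<subseteq> lattice5"
    by (auto simp: rot5_def lattice5_def)
qed simp

lemma bij_normalize5: "bij_betw normalize5 lattice5 normal_pairs"
  by (rule bij_betw_byWitness[where f' = "\<lambda>(x, y). if 5 dvd x + 2 * y then (x, y) else (y, x)"])
     (auto simp: lattice5_def normal_pairs_def normalize5_def dvd_5_residues)

lemma finite_fibres_sum_sqr: "finite_fibres (\<lambda>(k, l). sqr k + sqr l)"
  using finite_fibres_pair[OF finite_fibres_sqr finite_fibres_sqr] by simp

lemma sqr_rot5: "sqr (u + 2 * v) + sqr (2 * u - v) = 5 * sqr u + 5 * sqr v"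
proof -
  have "int (sqr (u + 2 * v) + sqr (2 * u - v)) = (u + 2 * v) ^ 2 + (2 * u - v) ^ 2"
    by (simp add: sqr_def)
  also have "\<dots> = int (5 * sqr u + 5 * sqr v)"
    by (simp add: sqr_def power2_eq_square algebra_simps)
  finally show ?thesis by (simp only: of_nat_eq_iff)
qed

lemma alt_sign_rot5: "alt_sign (u + 2 * v) * alt_sign (2 * u - v) = alt_sign u * alt_sign v"
  by (simp add: alt_sign_def)

definition pair_weight :: "int \<times> int \<Rightarrow> int" where
  "pair_weight = (\<lambda>(x, y). residue_weight {0} x * residue_weight {0} y
                         + residue_weight {1, 4} x * residue_weight {2, 3} y)"

lemma pair_weight_normal: "(x, y) \<in> normal_pairs \<Longrightarrow> pair_weight (x, y) = alt_sign x * alt_sign y"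
  and pair_weight_other: "(x, y) \<notin> normal_pairs \<Longrightarrow> pair_weight (x, y) = 0"
  by (auto simp: normal_pairs_def pair_weight_def residue_weight_def)

theorem lattice_identity:
  "phi_part {0} ^ 2 + phi_part {1, 4} * phi_part {2, 3} = dilate 5 phi_neg ^ 2"
proof -
  have lhs: "phi_part {0} ^ 2 + phi_part {1, 4} * phi_part {2, 3}
      = qseries (\<lambda>(k, l). sqr k + sqr l) pair_weight"
    unfolding power2_eq_square phi_part_def qseries_mult[OF finite_fibres_sqr finite_fibres_sqr]
      qseries_add pair_weight_def
    by (intro arg_cong[where f = "qseries _"] ext) (simp add: case_prod_beta)
  have five: "finite_fibres (\<lambda>k. 5 * sqr k)"
    by (rule finite_fibres_scale[OF finite_fibres_sqr]) simp
  have rhs: "dilate 5 phi_neg ^ 2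
      = qseries (\<lambda>(k, l). 5 * sqr k + 5 * sqr l) (\<lambda>(k, l). alt_sign k * alt_sign l)"
    unfolding power2_eq_square phi_neg_def qseries_dilate[of 5, simplified] qseries_mult[OF five five] ..
  have "qseries (\<lambda>(k, l). 5 * sqr k + 5 * sqr l) (\<lambda>(k, l). alt_sign k * alt_sign l)
      = qseries (\<lambda>(k, l). sqr k + sqr l) pair_weight"
  proof (rule qseries_reindex[OF finite_fibres_pair[OF five five] finite_fibres_sum_sqr
        bij_betw_trans[OF bij_rot5 bij_normalize5]])
    fix p :: "int \<times> int"
    obtain u v where p: "p = (u, v)" by fastforce
    have in_normal: "(normalize5 \<circ> rot5) p \<in> normal_pairs"
      using bij_betw_apply[OF bij_betw_trans[OF bij_rot5 bij_normalize5]] by simp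
    show "(\<lambda>(k, l). sqr k + sqr l) ((normalize5 \<circ> rot5) p) = (\<lambda>(k, l). 5 * sqr k + 5 * sqr l) p"
      using sqr_rot5[of u v] by (simp add: p rot5_def normalize5_def)
    show "pair_weight ((normalize5 \<circ> rot5) p) = (\<lambda>(k, l). alt_sign k * alt_sign l) p"
      using in_normal alt_sign_rot5[of u v]
      by (auto simp: p rot5_def normalize5_def pair_weight_normal mult.commute split: if_splits)
  next
    fix q :: "int \<times> int" assume "q \<notin> normal_pairs"
    then show "pair_weight q = 0" using pair_weight_other by (cases q) auto
  qed auto
  then show ?thesis using lhs rhs by simp
qed

section \<open>The 5-section of the overpartition generating function\<close>

lemma dsection_monomial:
  "dsection 5 (phi_part {0} ^ i * phi_part {1, 4} ^ j * phi_part {2, 3} ^ l)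
   = (if (j + 4 * l) mod 5 = 0 then phi_part {0} ^ i * phi_part {1, 4} ^ j * phi_part {2, 3} ^ l else 0)"
proof -
  have "supported_mod 5 ((((0 * i) mod 5 + (1 * j) mod 5) mod 5 + (4 * l) mod 5) mod 5)
      (phi_part {0} ^ i * phi_part {1, 4} ^ j * phi_part {2, 3} ^ l)"
    by (intro supported_mod_mult supported_mod_power phi_part_0_supported
        phi_part_14_supported phi_part_23_supported)
  moreover have "(((0 * i) mod 5 + (1 * j) mod 5) mod 5 + (4 * l) mod 5) mod 5 = (j + 4 * l) mod 5"
    by (simp add: mod_add_eq)
  ultimately show ?thesis
    using dsection_supported_zero dsection_supported_nonzero by auto
qed

lemma trinomial_4:
  "((a::'a::comm_ring_1) + b + c) ^ 4 = a^4 * b^0 * c^0 + 4 * (a^3 * b^1 * c^0) + 4 * (a^3 * b^0 * c^1)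
  + 6 * (a^2 * b^2 * c^0) + 12 * (a^2 * b^1 * c^1) + 6 * (a^2 * b^0 * c^2) + 4 * (a^1 * b^3 * c^0)
  + 12 * (a^1 * b^2 * c^1) + 12 * (a^1 * b^1 * c^2) + 4 * (a^1 * b^0 * c^3) + a^0 * b^4 * c^0
  + 4 * (a^0 * b^3 * c^1) + 6 * (a^0 * b^2 * c^2) + 4 * (a^0 * b^1 * c^3) + a^0 * b^0 * c^4"
  by (simp add: eval_nat_numeral algebra_simps)

lemma dsection_phi_neg_4:
  "dsection 5 (phi_neg ^ 4) = phi_part {0} ^ 4 + 12 * (phi_part {0} ^ 2 * phi_part {1, 4} * phi_part {2, 3})
     + 6 * (phi_part {1, 4} ^ 2 * phi_part {2, 3} ^ 2)"
  unfolding phi_neg_5_dissection trinomial_4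
  by (simp only: dsection_add dsection_numeral dsection_monomial) simp

text \<open>\<open>\<Sum> p(5n) q^(5n) \<equiv> \<phi>(-q^5)^3 (mod 5)\<close>: from \<open>G(q) \<phi>(-q^5) \<equiv> \<phi>(-q)^4\<close>, take the
  5-section, use \<open>A^4 + 12A^2BC + 6B^2C^2 \<equiv> (A^2 + BC)^2 = \<phi>(-q^5)^4\<close>, and divide by \<open>\<phi>(-q^5)\<close>.\<close>
theorem overpart_5_section: "fps_cong 5 (dsection 5 overpart_fps) (dilate 5 phi_neg ^ 3)"
proof -
  define G A B C where "G = overpart_fps" and "A = phi_part {0}" and "B = phi_part {1, 4}"
    and "C = phi_part {2, 3}"
  define P where "P = dilate 5 phi_neg"
  have pow5: "phi_neg ^ 5 = phi_neg * phi_neg ^ 4" and powP: "P ^ 4 = P * P ^ 3"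
    by (subst power_Suc[symmetric], simp)+
  have inverse: "dilate 5 G * P = 1"
    unfolding P_def G_def using dilate_mult[of 5 overpart_fps phi_neg] overpart_fps_times_phi_neg
    by (simp add: dilate_def)
  have "fps_cong 5 (G * P) (G * phi_neg ^ 5)"
    unfolding P_def using fps_frobenius[of 5] by (intro fps_cong_mult_left) (simp add: fps_cong_sym)
  also have "G * phi_neg ^ 5 = phi_neg ^ 4"
    unfolding pow5 G_def by (simp only: mult.assoc[symmetric] overpart_fps_times_phi_neg mult_1_left)
  finally have "fps_cong 5 (dsection 5 (G * P)) (dsection 5 (phi_neg ^ 4))"
    by (rule dsection_fps_cong)
  moreover have "dsection 5 (G * P) = P * dsection 5 G"
    unfolding P_def by (subst mult.commute) (rule dsection_dilate_mult, simp)
  ultimately have "fps_cong 5 (P * dsection 5 G) (dsection 5 (phi_neg ^ 4))"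
    by simp
  also have "dsection 5 (phi_neg ^ 4)
      = (A ^ 2 + B * C) ^ 2 + fps_const 5 * (2 * (A ^ 2 * B * C) + B ^ 2 * C ^ 2)"
  proof -
    have "fps_const 5 = (5 :: int fps)" by (simp add: numeral_fps_const)
    then show ?thesis unfolding dsection_phi_neg_4 A_def B_def C_def
      by (simp add: eval_nat_numeral algebra_simps)
  qed
  also have "fps_cong 5 \<dots> ((A ^ 2 + B * C) ^ 2)"
    by (rule fps_cong_multiple)
  also have "(A ^ 2 + B * C) ^ 2 = P ^ 4"
    unfolding A_def B_def C_def P_def lattice_identity by (simp flip: power_mult)
  finally have "fps_cong 5 (dilate 5 G * (P * dsection 5 G)) (dilate 5 G * (P * P ^ 3))"
    unfolding powP by (rule fps_cong_mult_left)
  then show ?thesis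
    unfolding G_def[symmetric] P_def[symmetric] by (simp only: mult.assoc[symmetric] inverse mult_1_left)
qed

corollary overpart_5n_cong: "[int (overpart (5 * m)) = fps_nth (phi_neg ^ 3) m] (mod 5)"
proof -
  have "[fps_nth (dsection 5 overpart_fps) (5 * m) = fps_nth (dilate 5 phi_neg ^ 3) (5 * m)] (mod 5)"
    using overpart_5_section by (simp add: fps_cong_def)
  then show ?thesis
    by (simp add: dsection_def overpart_fps_def dilate_power[symmetric] dilate_nth)
qed

section \<open>The 2-dissection of \<open>\<phi>(-q)\<close>\<close>

definition tri :: "nat \<Rightarrow> nat" where
  "tri k = k * (k + 1) div 2"

lemma tri_ge: "k \<le> tri k"
proof -
  have "k * 2 \<le> k * (k + 1)" by (cases k) auto
  then show ?thesis unfolding tri_def by (simp add: less_eq_div_iff_mult_less_eq)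
qed


lemma phi_qseries: "phi = qseries sqr (\<lambda>_. 1)"
proof (rule fps_ext)
  fix n
  have "{k::int. k ^ 2 = int n} = {k. sqr k = n}" by (auto simp: sqr_def)
  then show "fps_nth phi n = fps_nth (qseries sqr (\<lambda>_. 1)) n"
    by (simp add: phi_def qseries_nth)
qed

lemma psi_qseries: "psi = qseries tri (\<lambda>_. 1)"
  by (rule fps_ext) (simp add: psi_def qseries_nth tri_def)

lemma phi_neg_even_part: "qseries sqr (\<lambda>k. if even k then 1 else 0) = dilate 4 phi"
proof -
  have "qseries (\<lambda>k. 4 * sqr k) (\<lambda>_. 1) = qseries sqr (\<lambda>k. if even k then 1 else 0)"
  proof (rule qseries_reindex[where h = "\<lambda>k. 2 * k" and A = UNIV and B = "{k. even k}"])
    show "finite_fibres (\<lambda>k. 4 * sqr k)" by (rule finite_fibres_scale[OF finite_fibres_sqr]) simp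
    show "bij_betw (\<lambda>k. 2 * k) UNIV {k::int. even k}"
      by (rule bij_betw_byWitness[where f' = "\<lambda>k. k div 2"]) auto
    fix k :: int
    have "int (sqr (2 * k)) = int (4 * sqr k)" by (simp add: sqr_def power_mult_distrib)
    then show "sqr (2 * k) = 4 * sqr k" by (simp only: of_nat_eq_iff)
  qed (auto simp: finite_fibres_sqr)
  then show ?thesis using phi_qseries qseries_dilate[of 4 sqr "\<lambda>_. 1"] by simp
qed


definition signed_odd :: "nat \<times> bool \<Rightarrow> int" where
  "signed_odd = (\<lambda>(k, b). if b then 2 * int k + 1 else - (2 * int k + 1))"

lemma bij_signed_odd: "bij_betw signed_odd UNIV {j. odd j}"
proof (rule bij_betw_byWitness[where f' = "\<lambda>j. (nat ((\<bar>j\<bar> - 1) div 2), 0 \<le> j)"])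
  show "\<forall>p\<in>UNIV. (nat ((\<bar>signed_odd p\<bar> - 1) div 2), 0 \<le> signed_odd p) = p"
    by (auto simp: signed_odd_def)
  show "\<forall>j\<in>{j. odd j}. signed_odd (nat ((\<bar>j\<bar> - 1) div 2), 0 \<le> j) = j"
  proof
    fix j :: int assume "j \<in> {j. odd j}"
    then obtain t where t: "j = 2 * t + 1" by (auto elim: oddE)
    show "signed_odd (nat ((\<bar>j\<bar> - 1) div 2), 0 \<le> j) = j"
    proof (cases "0 \<le> j")
      case True
      then have "(\<bar>j\<bar> - 1) div 2 = t" "0 \<le> t" using t by simp_all
      then show ?thesis using True t by (simp add: signed_odd_def)
    next
      case False
      then have "(\<bar>j\<bar> - 1) div 2 = - t - 1" "t < 0" using t by simp_all
      then show ?thesis using False t by (simp add: signed_odd_def)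
    qed
  qed
qed (auto simp: signed_odd_def split: if_splits)

lemma sqr_signed_odd: "sqr (signed_odd (k, b)) = 1 + 8 * tri k"
proof -
  have "(signed_odd (k, b)) ^ 2 = (2 * int k + 1) ^ 2"
    by (cases b) (simp_all only: signed_odd_def case_prod_conv if_True if_False power2_minus)
  then have "sqr (signed_odd (k, b)) = sqr (2 * int k + 1)"
    by (simp add: sqr_def)
  also have "int (sqr (2 * int k + 1)) = 4 * (int k * (int k + 1)) + 1"
    by (simp add: sqr_def power2_eq_square algebra_simps)
  also have "int k * (int k + 1) = int (2 * tri k)" by (simp add: tri_def algebra_simps)
  finally show ?thesis by simp
qed

lemma qseries_bool_copies:
  assumes "finite_fibres e"
  shows "qseries (\<lambda>(k, b::bool). e k) (\<lambda>_. 1) = 2 * qseries e (\<lambda>_. 1)"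
proof (rule fps_ext)
  fix n
  have "finite {k. e k = n}" using assms by (simp add: finite_fibres_def)
  moreover have "{p. (\<lambda>(k, b::bool). e k) p = n} = {k. e k = n} \<times> UNIV" by auto
  ultimately show "fps_nth (qseries (\<lambda>(k, b::bool). e k) (\<lambda>_. 1)) n = fps_nth (2 * qseries e (\<lambda>_. 1)) n"
    by (simp add: qseries_nth card_cartesian_product fps_numeral_mult_nth)
qed

lemma finite_fibres_forget:
  assumes "finite_fibres e"
  shows "finite_fibres (\<lambda>(k, b::'b::finite). e k)"
proof -
  have "{p. (\<lambda>(k, b::'b). e k) p = n} = {k. e k = n} \<times> UNIV" for n by auto
  then show ?thesis using assms by (simp add: finite_fibres_def)
qed

lemma phi_neg_odd_part: "qseries sqr (\<lambda>k. if odd k then -1 else 0) = - (2 * fps_X * dilate 8 psi)"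
proof -
  have tri_fibres: "finite_fibres (\<lambda>k. 1 + 8 * tri k)"
    unfolding finite_fibres_def
  proof
    fix n
    have "{k. 1 + 8 * tri k = n} \<subseteq> {..n}"
    proof
      fix k assume "k \<in> {k. 1 + 8 * tri k = n}"
      then show "k \<in> {..n}" using tri_ge[of k] by simp
    qed
    then show "finite {k. 1 + 8 * tri k = n}" by (rule finite_subset) simp
  qed
  have "qseries sqr (\<lambda>k. if odd k then -1 else 0) = qseries (\<lambda>(k, b::bool). 1 + 8 * tri k) (\<lambda>_. -1)"
  proof (rule qseries_reindex[OF finite_fibres_sqr finite_fibres_forget[OF tri_fibres]
        bij_betw_inv_into[OF bij_signed_odd]])
    fix j :: int assume "j \<in> {j. odd j}"
    then have j: "signed_odd (inv_into UNIV signed_odd j) = j"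
      by (simp add: bij_betw_inv_into_right[OF bij_signed_odd])
    obtain k b where kb: "inv_into UNIV signed_odd j = (k, b)" by fastforce
    show "(\<lambda>(k, b). 1 + 8 * tri k) (inv_into UNIV signed_odd j) = sqr j"
      using j kb sqr_signed_odd[of k b] by simp
  qed auto
  also have "\<dots> = - qseries (\<lambda>(k, b::bool). 1 + 8 * tri k) (\<lambda>_. 1)"
    by (simp add: qseries_uminus)
  also have "qseries (\<lambda>(k, b::bool). 1 + 8 * tri k) (\<lambda>_. 1) = 2 * qseries (\<lambda>k. 1 + 8 * tri k) (\<lambda>_. 1)"
    by (rule qseries_bool_copies[OF tri_fibres])
  also have "qseries (\<lambda>k. 1 + 8 * tri k) (\<lambda>_. 1) = fps_X * dilate 8 psi"
  proof -
    have "dilate 8 psi = qseries (\<lambda>k. 8 * tri k) (\<lambda>_. 1)"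
      unfolding psi_qseries by (rule qseries_dilate) simp
    then have "fps_X ^ 1 * dilate 8 psi = qseries (\<lambda>k. 1 + 8 * tri k) (\<lambda>_. 1)"
      by (simp only: qseries_shift)
    then show ?thesis by simp
  qed
  finally show ?thesis by (simp add: mult.assoc)
qed

theorem phi_neg_2_dissection: "phi_neg = dilate 4 phi - 2 * fps_X * dilate 8 psi"
proof -
  have "alt_sign = (\<lambda>k. (if even k then 1 else 0) + (if odd k then -1 else 0))"
    by (auto simp: alt_sign_def)
  then have "phi_neg = qseries sqr (\<lambda>k. if even k then 1 else 0) + qseries sqr (\<lambda>k. if odd k then -1 else 0)"
    unfolding phi_neg_def qseries_add by simp
  then show ?thesis using phi_neg_even_part phi_neg_odd_part by simp
qed

lemma dilate_dilate:
  assumes "0 < a" "0 < b"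
  shows "dilate a (dilate b f) = dilate (a * b) f"
proof (rule fps_ext)
  fix n
  have iff: "a dvd n \<and> b dvd n div a \<longleftrightarrow> a * b dvd n"
    using assms by (auto simp: dvd_div_iff_mult mult.commute elim!: dvdE)
  have "fps_nth (dilate a (dilate b f)) n
      = (if a dvd n \<and> b dvd n div a then fps_nth f (n div a div b) else 0)"
    using assms by (simp add: dilate_nth)
  also have "\<dots> = fps_nth (dilate (a * b) f) n"
    using assms by (simp only: iff div_mult2_eq dilate_nth mult_pos_pos)
  finally show "fps_nth (dilate a (dilate b f)) n = fps_nth (dilate (a * b) f) n" .
qed

lemma dvd_less_iff_zero: "(x::nat) < d \<Longrightarrow> d dvd x \<longleftrightarrow> x = 0"
  by (auto dest: dvd_imp_le)

lemma X_power_dilate_nth: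
  assumes "r < d" "s < d"
  shows "fps_nth (fps_X ^ r * dilate d h) (d * n + s) = (if r = s then fps_nth h n else 0)"
proof (cases "r \<le> d * n + s")
  case True
  have "d dvd d * n + s - r \<longleftrightarrow> r = s"
  proof (cases "r \<le> s")
    case True
    then have "d * n + s - r = d * n + (s - r)" by simp
    then have "d dvd d * n + s - r \<longleftrightarrow> d dvd s - r" by (metis dvd_add_right_iff dvd_triv_left)
    then show ?thesis using True assms dvd_less_iff_zero[of "s - r" d] by auto
  next
    case False
    then obtain m where m: "n = Suc m" using \<open>r \<le> d * n + s\<close> assms by (cases n) auto
    then have "d * n + s - r = d * m + (d + s - r)" using False assms by simp
    then have "d dvd d * n + s - r \<longleftrightarrow> d dvd d + s - r" by (metis dvd_add_right_iff dvd_triv_left)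
    then show ?thesis using False assms dvd_less_iff_zero[of "d + s - r" d] by auto
  qed
  moreover have "(d * n + s - r) div d = n" if "r = s" using that assms by simp
  ultimately show ?thesis using True assms by (auto simp: fps_X_power_mult_nth dilate_nth)
next
  case False
  then show ?thesis using assms by (auto simp: fps_X_power_mult_nth)
qed

lemma binomial_cube_shifted:
  "((a::'a::comm_ring_1) - 2 * x * b) ^ 3
   = x ^ 0 * a ^ 3 - 6 * (x ^ 1 * (a ^ 2 * b)) + 12 * (x ^ 2 * (a * b ^ 2)) - 8 * (x ^ 3 * b ^ 3)"
  by (simp add: eval_nat_numeral algebra_simps)

lemma phi_neg_cube_4_dissection:
  defines "\<Psi> \<equiv> dilate 2 psi"
  shows "phi_neg ^ 3 = fps_X ^ 0 * dilate 4 (phi ^ 3) - 6 * (fps_X ^ 1 * dilate 4 (phi ^ 2 * \<Psi>))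
     + 12 * (fps_X ^ 2 * dilate 4 (phi * \<Psi> ^ 2)) - 8 * (fps_X ^ 3 * dilate 4 (\<Psi> ^ 3))"
proof -
  have "dilate 8 psi = dilate 4 \<Psi>" unfolding \<Psi>_def by (simp add: dilate_dilate)
  then show ?thesis
    unfolding phi_neg_2_dissection binomial_cube_shifted
    by (simp only: dilate_mult dilate_power zero_less_numeral)
qed

lemma phi_neg_cube_coefficients:
  defines "\<Psi> \<equiv> dilate 2 psi"
  shows "fps_nth (phi_neg ^ 3) (4 * n) = fps_nth (phi ^ 3) n"
    and "fps_nth (phi_neg ^ 3) (4 * n + 1) = - 6 * fps_nth (phi ^ 2 * \<Psi>) n"
    and "fps_nth (phi_neg ^ 3) (4 * n + 2) = 12 * fps_nth (phi * \<Psi> ^ 2) n"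
    and "fps_nth (phi_neg ^ 3) (4 * n + 3) = - 8 * fps_nth (\<Psi> ^ 3) n"
proof -
  have coeff: "fps_nth (phi_neg ^ 3) (4 * n + s) =
     (if 0 = s then fps_nth (phi ^ 3) n else 0) - 6 * (if 1 = s then fps_nth (phi ^ 2 * \<Psi>) n else 0)
     + 12 * (if 2 = s then fps_nth (phi * \<Psi> ^ 2) n else 0) - 8 * (if 3 = s then fps_nth (\<Psi> ^ 3) n else 0)"
    if "s < 4" for s
    unfolding phi_neg_cube_4_dissection \<Psi>_def
    using that by (simp only: fps_add_nth fps_sub_nth fps_numeral_mult_nth X_power_dilate_nth)
  show "fps_nth (phi_neg ^ 3) (4 * n) = fps_nth (phi ^ 3) n"
    using coeff[of 0] by simp
  show "fps_nth (phi_neg ^ 3) (4 * n + 1) = - 6 * fps_nth (phi ^ 2 * \<Psi>) n"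
    using coeff[of 1] by simp
  show "fps_nth (phi_neg ^ 3) (4 * n + 2) = 12 * fps_nth (phi * \<Psi> ^ 2) n"
    using coeff[of 2] by simp
  show "fps_nth (phi_neg ^ 3) (4 * n + 3) = - 8 * fps_nth (\<Psi> ^ 3) n"
    using coeff[of 3] by simp
qed

lemma cong_rescale: "[a = c * x] (mod m) \<Longrightarrow> [c = c'] (mod m) \<Longrightarrow> [a = c' * x] (mod m)"
  for a c c' x m :: int
  using cong_trans cong_scalar_right by blast

text \<open>The coefficient of \<open>q^(20n+5s)\<close> in \<open>G\<close> is congruent to that of \<open>q^(4n+s)\<close> in \<open>\<phi>(-q)^3\<close>;
  the 4-dissection of \<open>\<phi>(-q)^3\<close> and the reductions \<open>-6 \<equiv> -1\<close>, \<open>12 \<equiv> 2\<close>, \<open>-8 \<equiv> -3\<close> finish the proof.\<close>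
theorem mainTheorem11:
  shows "(\<forall>n. [int (overpart (20 * n)) = fps_nth (phi ^ 3) n] (mod 5)) \<and>
    (\<forall>n. [int (overpart (20 * n + 5)) = fps_nth (- (phi ^ 2 * fps_compose psi (fps_X ^ 2))) n] (mod 5)) \<and>
    (\<forall>n. [int (overpart (20 * n + 10)) = fps_nth (2 * phi * (fps_compose psi (fps_X ^ 2)) ^ 2) n] (mod 5)) \<and>
    (\<forall>n. [int (overpart (20 * n + 15)) = fps_nth (- 3 * (fps_compose psi (fps_X ^ 2)) ^ 3) n] (mod 5))"
proof -
  have \<Psi>: "fps_compose psi (fps_X ^ 2) = dilate 2 psi" by (simp add: dilate_def)
  have five_section: "[int (overpart (20 * n + 5 * s)) = fps_nth (phi_neg ^ 3) (4 * n + s)] (mod 5)" for n s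
    using overpart_5n_cong[of "4 * n + s"] by (simp add: algebra_simps)
  have "[int (overpart (20 * n)) = fps_nth (phi ^ 3) n] (mod 5)" for n
    using five_section[of n 0] phi_neg_cube_coefficients(1) by simp
  moreover have "[int (overpart (20 * n + 5)) = (- 1) * fps_nth (phi ^ 2 * dilate 2 psi) n] (mod 5)" for n
  proof (rule cong_rescale)
    show "[int (overpart (20 * n + 5)) = (- 6) * fps_nth (phi ^ 2 * dilate 2 psi) n] (mod 5)"
      using five_section[of n 1] phi_neg_cube_coefficients(2) by simp
  qed (simp add: cong_def)
  moreover have "[int (overpart (20 * n + 10)) = 2 * fps_nth (phi * dilate 2 psi ^ 2) n] (mod 5)" for n
  proof (rule cong_rescale)
    show "[int (overpart (20 * n + 10)) = (12) * fps_nth (phi * dilate 2 psi ^ 2) n] (mod 5)"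
      using five_section[of n 2] phi_neg_cube_coefficients(3) by simp
  qed (simp add: cong_def)
  moreover have "[int (overpart (20 * n + 15)) = (- 3) * fps_nth (dilate 2 psi ^ 3) n] (mod 5)" for n
  proof (rule cong_rescale)
    show "[int (overpart (20 * n + 15)) = (- 8) * fps_nth (dilate 2 psi ^ 3) n] (mod 5)"
      using five_section[of n 3] phi_neg_cube_coefficients(4) by simp
  qed (simp add: cong_def)
  ultimately show ?thesis
    unfolding \<Psi> by (simp add: mult.assoc fps_numeral_mult_nth)
qed

end
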